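(* In the single-user model below, take $\bm\delta=\mathbf 0$ (all antennas use one-bit ADCs) and fix the channel vectors with $\bm\lambda_n\neq\mathbf 0$ for all $n$. Let $\bar{\bm\lambda}=[\bm\lambda_1^t/\|\bm\lambda_1\|,\dots,\bm\lambda_N^t/\|\bm\lambda_N\|]^t\in\mathbb C^{NQ}$ and $\bar{\mathbf D}=\lim_{\mathcal E_{\mathrm s}\to\infty}\mathbf D$. Then $$\lim_{\mathcal E_{\mathrm s}\to\infty}\Delta(\mathbf w_{\mathrm{opt}},\bm\delta)=\frac2\pi\,\bar{\bm\lambda}^t\bar{\mathbf D}^{-1}\bar{\bm\lambda}^*.$$
   Context: Single-user model: $N,Q\ge1$, $1\le T\le Q$, $\mathbf h_n=[h_{n1},\dots,h_{nT},0,\dots,0]^t\in\mathbb C^Q$, $\mathbf F$ the $Q\times Q$ unitary DFT matrix, $\bm\lambda_n=\sqrt Q\mathbf F\mathbf h_n$, $\mathbf C_n=\mathbf F^\dagger\mathrm{diag}(\bm\lambda_n)\mathbf F$, $\tilde{\mathbf x}\sim\mathcal{CN}(\mathbf 0,\mathcal E_{\mathrm s}\mathbf I_Q)$, $\mathbf x=\mathbf F^\dagger\tilde{\mathbf x}$, $\mathbf z_n\sim\mathcal{CN}(\mathbf 0,\mathbf I_Q)$ all independent, $\mathbf y_n=\mathbf C_n\mathbf x+\mathbf z_n$; with $\bm\delta=\mathbf 0$, $\mathbf r_n=\mathrm{sgn}(\mathbf y_n)$ where $\mathrm{sgn}(x)=\frac1{\sqrt2}[\mathrm{sgn}(x_{\mathrm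 R})+j\,\mathrm{sgn}(x_{\mathrm I})]$ componentwise. For $\mathbf w=[\mathbf w_1^t,\dots,\mathbf w_N^t]^t$, $\hat{\tilde{\mathbf x}}=\sum_n\mathrm{diag}(\mathbf w_n)\mathbf F\mathbf r_n$, $\Delta(\mathbf w,\bm\delta)=|\mathbb E[\hat{\tilde{\mathbf x}}^\dagger\tilde{\mathbf x}]|^2/(Q\mathcal E_{\mathrm s}\mathbb E[\hat{\tilde{\mathbf x}}^\dagger\hat{\tilde{\mathbf x}}])$, $\mathbf w_{\mathrm{opt}}$ maximizes $\Delta(\cdot,\bm\delta)$. $\mathbf R_{nm}=\mathbb E[\mathbf r_n\mathbf r_m^\dagger]$; $\mathbf D_{nm}$ is the $Q\times Q$ diagonal matrix with $(\mathbf D_{nm})_{qq}=(\mathbf F\mathbf R_{nm}\mathbf F^\dagger)_{qq}$; $\mathbf D$ is the $NQ\times NQ$ block matrix whose $(i,k)$-th block is $\mathbf D_{ki}$ (it depends on $\mathcal E_{\mathrm s}$). *)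

theory Defs
  imports "HOL-Probability.Probability"
begin

text \<open>Vectors in C^Q are functions nat => complex (indices 0..Q-1),
  Q x Q matrices are functions nat => nat => complex.  Antennas are indexed 0..N-1.\<close>

definition dft :: "nat \<Rightarrow> nat \<Rightarrow> nat \<Rightarrow> complex" where
  "dft Q p q = cis (- 2 * pi * real p * real q / real Q) / complex_of_real (sqrt (real Q))"

definition dft_adj :: "nat \<Rightarrow> nat \<Rightarrow> nat \<Rightarrow> complex" where
  "dft_adj Q p q = cnj (dft Q q p)"

definition matvec :: "nat \<Rightarrow> (nat \<Rightarrow> nat \<Rightarrow> complex) \<Rightarrow> (nat \<Rightarrow> complex) \<Rightarrow> nat \<Rightarrow> complex" where
  "matvec Q A v = (\<lambda>p. \<Sum>q<Q. A p q * v q)"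

definition matmul :: "nat \<Rightarrow> (nat \<Rightarrow> nat \<Rightarrow> complex) \<Rightarrow> (nat \<Rightarrow> nat \<Rightarrow> complex) \<Rightarrow> nat \<Rightarrow> nat \<Rightarrow> complex" where
  "matmul Q A B = (\<lambda>p q. \<Sum>k<Q. A p k * B k q)"

definition diagm :: "(nat \<Rightarrow> complex) \<Rightarrow> nat \<Rightarrow> nat \<Rightarrow> complex" where
  "diagm v = (\<lambda>p q. if p = q then v p else 0)"

definition hpad :: "nat \<Rightarrow> (nat \<Rightarrow> nat \<Rightarrow> complex) \<Rightarrow> nat \<Rightarrow> nat \<Rightarrow> complex" where
  "hpad T h n q = (if q < T then h n q else 0)"

definition lam :: "nat \<Rightarrow> nat \<Rightarrow> (nat \<Rightarrow> nat \<Rightarrow> complex) \<Rightarrow> nat \<Rightarrow> nat \<Rightarrow> complex" where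
  "lam Q T h n = (\<lambda>p. complex_of_real (sqrt (real Q)) * matvec Q (dft Q) (hpad T h n) p)"

definition circ :: "nat \<Rightarrow> nat \<Rightarrow> (nat \<Rightarrow> nat \<Rightarrow> complex) \<Rightarrow> nat \<Rightarrow> nat \<Rightarrow> nat \<Rightarrow> complex" where
  "circ Q T h n = matmul Q (dft_adj Q) (matmul Q (diagm (lam Q T h n)) (dft Q))"

definition csgn :: "complex \<Rightarrow> complex" where
  "csgn z = Complex (sgn (Re z)) (sgn (Im z)) / complex_of_real (sqrt 2)"

text \<open>Probability space: i.i.d. standard real Gaussians g(k,q,b), k \<le> N, q < Q, b :: bool.
  k = 0 gives the signal x~ (real/imag parts), k = n+1 the noise z_n of antenna n.\<close>
definition std_normal :: "real measure" where
  "std_normal = density lborel std_normal_density"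

definition Omega :: "nat \<Rightarrow> nat \<Rightarrow> (nat \<times> nat \<times> bool \<Rightarrow> real) measure" where
  "Omega N Q = PiM ({..N} \<times> {..<Q} \<times> UNIV) (\<lambda>_. std_normal)"

text \<open>x~ ~ CN(0, Es I_Q): real and imaginary parts are N(0, Es/2).\<close>
definition xt :: "real \<Rightarrow> (nat \<times> nat \<times> bool \<Rightarrow> real) \<Rightarrow> nat \<Rightarrow> complex" where
  "xt Es \<omega> q = complex_of_real (sqrt (Es / 2)) * Complex (\<omega> (0, q, True)) (\<omega> (0, q, False))"

definition noise :: "(nat \<times> nat \<times> bool \<Rightarrow> real) \<Rightarrow> nat \<Rightarrow> nat \<Rightarrow> complex" where
  "noise \<omega> n q = complex_of_real (sqrt (1 / 2)) * Complex (\<omega> (Suc n, q, True)) (\<omega> (Suc n, q, False))"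

definition xsig :: "nat \<Rightarrow> real \<Rightarrow> (nat \<times> nat \<times> bool \<Rightarrow> real) \<Rightarrow> nat \<Rightarrow> complex" where
  "xsig Q Es \<omega> = matvec Q (dft_adj Q) (xt Es \<omega>)"

definition yrx :: "nat \<Rightarrow> nat \<Rightarrow> (nat \<Rightarrow> nat \<Rightarrow> complex) \<Rightarrow> real \<Rightarrow> (nat \<times> nat \<times> bool \<Rightarrow> real) \<Rightarrow> nat \<Rightarrow> nat \<Rightarrow> complex" where
  "yrx Q T h Es \<omega> n = (\<lambda>p. matvec Q (circ Q T h n) (xsig Q Es \<omega>) p + noise \<omega> n p)"

definition rq :: "nat \<Rightarrow> nat \<Rightarrow> (nat \<Rightarrow> nat \<Rightarrow> complex) \<Rightarrow> real \<Rightarrow> (nat \<times> nat \<times> bool \<Rightarrow> real) \<Rightarrow> nat \<Rightarrow> nat \<Rightarrow> complex" where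
  "rq Q T h Es \<omega> n = (\<lambda>p. csgn (yrx Q T h Es \<omega> n p))"

definition xhat :: "nat \<Rightarrow> nat \<Rightarrow> nat \<Rightarrow> (nat \<Rightarrow> nat \<Rightarrow> complex) \<Rightarrow> real \<Rightarrow> (nat \<Rightarrow> nat \<Rightarrow> complex)
    \<Rightarrow> (nat \<times> nat \<times> bool \<Rightarrow> real) \<Rightarrow> nat \<Rightarrow> complex" where
  "xhat N Q T h Es w \<omega> = (\<lambda>p. \<Sum>n<N. w n p * matvec Q (dft Q) (rq Q T h Es \<omega> n) p)"

definition Delta :: "nat \<Rightarrow> nat \<Rightarrow> nat \<Rightarrow> (nat \<Rightarrow> nat \<Rightarrow> complex) \<Rightarrow> real \<Rightarrow> (nat \<Rightarrow> nat \<Rightarrow> complex) \<Rightarrow> real" where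
  "Delta N Q T h Es w =
     (cmod (integral\<^sup>L (Omega N Q) (\<lambda>\<omega>. \<Sum>p<Q. cnj (xhat N Q T h Es w \<omega> p) * xt Es \<omega> p)))\<^sup>2
     / (real Q * Es * integral\<^sup>L (Omega N Q) (\<lambda>\<omega>. \<Sum>p<Q. (cmod (xhat N Q T h Es w \<omega> p))\<^sup>2))"

definition Rmat :: "nat \<Rightarrow> nat \<Rightarrow> nat \<Rightarrow> (nat \<Rightarrow> nat \<Rightarrow> complex) \<Rightarrow> real \<Rightarrow> nat \<Rightarrow> nat \<Rightarrow> nat \<Rightarrow> nat \<Rightarrow> complex" where
  "Rmat N Q T h Es n m = (\<lambda>p q. integral\<^sup>L (Omega N Q) (\<lambda>\<omega>. rq Q T h Es \<omega> n p * cnj (rq Q T h Es \<omega> m q)))"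

definition Dblk :: "nat \<Rightarrow> nat \<Rightarrow> nat \<Rightarrow> (nat \<Rightarrow> nat \<Rightarrow> complex) \<Rightarrow> real \<Rightarrow> nat \<Rightarrow> nat \<Rightarrow> nat \<Rightarrow> nat \<Rightarrow> complex" where
  "Dblk N Q T h Es n m = diagm (\<lambda>q. matmul Q (matmul Q (dft Q) (Rmat N Q T h Es n m)) (dft_adj Q) q q)"

text \<open>The NQ x NQ matrix D: row index i*Q+p, column index k*Q+q; the (i,k)-th block is D_{ki}.\<close>
definition Dmat :: "nat \<Rightarrow> nat \<Rightarrow> nat \<Rightarrow> (nat \<Rightarrow> nat \<Rightarrow> complex) \<Rightarrow> real \<Rightarrow> nat \<Rightarrow> nat \<Rightarrow> complex" where
  "Dmat N Q T h Es a b = Dblk N Q T h Es (b div Q) (a div Q) (a mod Q) (b mod Q)"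

definition is_inverse :: "nat \<Rightarrow> (nat \<Rightarrow> nat \<Rightarrow> complex) \<Rightarrow> (nat \<Rightarrow> nat \<Rightarrow> complex) \<Rightarrow> bool" where
  "is_inverse K A B \<longleftrightarrow>
     (\<forall>i<K. \<forall>j<K. (\<Sum>k<K. A i k * B k j) = (if i = j then 1 else 0)) \<and>
     (\<forall>i<K. \<forall>j<K. (\<Sum>k<K. B i k * A k j) = (if i = j then 1 else 0))"

definition invertible_sq :: "nat \<Rightarrow> (nat \<Rightarrow> nat \<Rightarrow> complex) \<Rightarrow> bool" where
  "invertible_sq K A \<longleftrightarrow> (\<exists>B. is_inverse K A B)"

definition inv_sq :: "nat \<Rightarrow> (nat \<Rightarrow> nat \<Rightarrow> complex) \<Rightarrow> nat \<Rightarrow> nat \<Rightarrow> complex" where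
  "inv_sq K A = (\<lambda>i j. if i < K \<and> j < K then (SOME B. is_inverse K A B) i j else 0)"

definition vnorm :: "nat \<Rightarrow> (nat \<Rightarrow> complex) \<Rightarrow> real" where
  "vnorm Q v = sqrt (\<Sum>q<Q. (cmod (v q))\<^sup>2)"

definition lambar :: "nat \<Rightarrow> nat \<Rightarrow> (nat \<Rightarrow> nat \<Rightarrow> complex) \<Rightarrow> nat \<Rightarrow> complex" where
  "lambar Q T h a = lam Q T h (a div Q) (a mod Q) / complex_of_real (vnorm Q (lam Q T h (a div Q)))"

end

(*
  For fixed signal energy, every received one-bit sample is the quantized sign of a complex Gaussian
  variable, and the Bussgang identity E[sgn(a . w) (b . w)] = sqrt(2/pi) (a . b) / |a| for standard
  Gaussian w makes all correlations explicit. This turns Delta(w) into a generalized Rayleigh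
  quotient |<w, u>|^2 / (w^H D w), with D the matrix of the statement and u the normalized
  correlation between the DFT of the quantized signals and the transmitted symbols; its maximum is
  u^H D^-1 u. As the energy grows, u tends to sqrt(2/pi) times the conjugate of the normalized
  channel vector and D tends to the invertible limit Dbar, which is Hermitian positive definite.
  Coercivity of Dbar controls the maximal quotient under the perturbation D - Dbar, so the maximum
  converges to the same expression for Dbar.
*)

theory Submission
  imports Defs
begin

section \<open>Gaussian integrals\<close>

lemma prob_space_std_normal: "prob_space std_normal"
  unfolding std_normal_def using prob_space_normal_density by simp

lemma sets_std_normal [measurable_cong, simp]: "sets std_normal = sets borel"
  by (simp add: std_normal_def)

lemma integral_std_normal_eq_density:
  fixes f :: "real \<Rightarrow> real"
  assumes [measurable]: "f \<in> borel_measurable borel"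
  shows "integral\<^sup>L std_normal f = (\<integral>x. std_normal_density x * f x \<partial>lborel)"
  unfolding std_normal_def by (subst integral_density) auto

lemma std_normal_density_times_exp_square:
  fixes \<alpha> s a t :: real
  assumes "\<alpha> > 0"
  defines "b \<equiv> 1 + 2 * \<alpha> * a\<^sup>2"
  shows "std_normal_density t * exp (- \<alpha> * (s + a * t)\<^sup>2)
    = exp (- \<alpha> * s\<^sup>2 / b) / sqrt b * normal_density (- 2 * \<alpha> * a * s / b) (1 / sqrt b) t"
proof -
  have b: "b > 0" unfolding b_def using assms by (simp add: add_pos_nonneg)
  have complete_square: "- t\<^sup>2 / 2 + - \<alpha> * (s + a * t)\<^sup>2
      = - \<alpha> * s\<^sup>2 / b + - (t - (- 2 * \<alpha> * a * s / b))\<^sup>2 / (2 * (1 / sqrt b)\<^sup>2)"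
    using b by (simp add: field_simps power2_eq_square) (simp add: b_def algebra_simps power2_eq_square)
  have "std_normal_density t * exp (- \<alpha> * (s + a * t)\<^sup>2)
      = 1 / sqrt (2 * pi) * exp (- t\<^sup>2 / 2 + - \<alpha> * (s + a * t)\<^sup>2)"
    by (simp only: std_normal_density_def exp_add mult.assoc)
  also have "\<dots> = exp (- \<alpha> * s\<^sup>2 / b) / sqrt b * normal_density (- 2 * \<alpha> * a * s / b) (1 / sqrt b) t"
    unfolding complete_square exp_add using b
    by (simp add: normal_density_def real_sqrt_mult real_sqrt_divide field_simps)
  finally show ?thesis .
qed

lemma integral_std_normal_exp_square:
  fixes \<alpha> s a :: real
  assumes "\<alpha> > 0"
  shows "(\<integral>t. exp (- \<alpha> * (s + a * t)\<^sup>2) \<partial>std_normal)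
    = exp (- \<alpha> * s\<^sup>2 / (1 + 2 * \<alpha> * a\<^sup>2)) / sqrt (1 + 2 * \<alpha> * a\<^sup>2)"
proof -
  let ?b = "1 + 2 * \<alpha> * a\<^sup>2"
  have "?b > 0" using assms by (simp add: add_pos_nonneg)
  have "(\<integral>t. exp (- \<alpha> * (s + a * t)\<^sup>2) \<partial>std_normal)
      = (\<integral>t. std_normal_density t * exp (- \<alpha> * (s + a * t)\<^sup>2) \<partial>lborel)"
    by (rule integral_std_normal_eq_density) simp
  also have "\<dots> = (\<integral>t. exp (- \<alpha> * s\<^sup>2 / ?b) / sqrt ?b
      * normal_density (- 2 * \<alpha> * a * s / ?b) (1 / sqrt ?b) t \<partial>lborel)"
    using std_normal_density_times_exp_square[OF assms] by simp
  also have "\<dots> = exp (- \<alpha> * s\<^sup>2 / ?b) / sqrt ?b"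
    using \<open>?b > 0\<close> by (simp add: integral_normal_density)
  finally show ?thesis .
qed

lemma DERIV_minus_std_normal_density:
  "DERIV (\<lambda>t. - std_normal_density t) x :> x * std_normal_density x"
proof -
  have "DERIV (\<lambda>t. - exp (- t\<^sup>2 / 2)) x :> x * exp (- x\<^sup>2 / 2)"
    by (auto intro!: derivative_eq_intros simp: power2_eq_square)
  from DERIV_cmult[OF this, of "1 / sqrt (2 * pi)"] show ?thesis
    by (simp add: std_normal_density_def mult_ac)
qed

lemma std_normal_density_shift_tendsto_0:
  "(\<lambda>n::nat. std_normal_density (c + real n)) \<longlonglongrightarrow> 0"
proof -
  have "filterlim (\<lambda>n::nat. c + real n) at_top sequentially"
    by (rule filterlim_tendsto_add_at_top[OF tendsto_const filterlim_real_sequentially])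
  then have "filterlim (\<lambda>n::nat. 1 / 2 * (c + real n)\<^sup>2) at_top sequentially"
    by (intro filterlim_tendsto_pos_mult_at_top[OF tendsto_const] filterlim_pow_at_top) auto
  then have "(\<lambda>n::nat. exp (- (1 / 2 * (c + real n)\<^sup>2))) \<longlonglongrightarrow> 0"
    by (intro filterlim_compose[OF exp_at_bot]) (simp add: filterlim_uminus_at_top)
  then show ?thesis
    unfolding std_normal_density_def using tendsto_mult_left[of _ 0 _ "1 / sqrt (2 * pi)"] by simp
qed

lemma integrable_std_normal_density_times_id:
  "integrable lborel (\<lambda>t. std_normal_density t * t)"
  using integrable_std_normal_moment[of 1] by simp

lemma integral_std_normal_density_times_id_above:
  "(\<integral>t. std_normal_density t * t * indicator {c..} t \<partial>lborel) = std_normal_density c"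
proof -
  let ?f = "\<lambda>t. std_normal_density t * t * indicator {c..} t"
  let ?f_upto = "\<lambda>(n::nat) t. std_normal_density t * t * indicator {c..c + real n} t"
  have "(\<lambda>n. integral\<^sup>L lborel (?f_upto n)) \<longlonglongrightarrow> integral\<^sup>L lborel ?f"
  proof (rule integral_dominated_convergence[where w = "\<lambda>t. norm (std_normal_density t * t)"])
    show "AE x in lborel. (\<lambda>n. ?f_upto n x) \<longlonglongrightarrow> ?f x"
    proof (rule AE_I2)
      fix x
      obtain n0 :: nat where "x - c \<le> real n0" using real_arch_simple by blast
      then have "eventually (\<lambda>n. ?f_upto n x = ?f x) sequentially"
        by (auto simp: eventually_sequentially indicator_def intro!: exI[of _ n0])
      then show "(\<lambda>n. ?f_upto n x) \<longlonglongrightarrow> ?f x" by (rule tendsto_eventually)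
    qed
  qed (auto simp: indicator_def intro: integrable_norm integrable_std_normal_density_times_id)
  moreover have "integral\<^sup>L lborel (?f_upto n) = std_normal_density c - std_normal_density (c + real n)" for n
  proof -
    have "integral\<^sup>L lborel (?f_upto n)
        = (\<integral>t. (t * std_normal_density t) * indicator {c..c + real n} t \<partial>lborel)"
      by (simp add: mult_ac)
    also have "\<dots> = - std_normal_density (c + real n) - - std_normal_density c"
    proof (rule integral_FTC_Icc_real)
      show "isCont (\<lambda>t. t * std_normal_density t) x" for x
        unfolding std_normal_density_def by (intro continuous_intros) auto
    qed (auto intro: DERIV_minus_std_normal_density)
    finally show ?thesis by simp
  qed
  moreover have "(\<lambda>n. std_normal_density c - std_normal_density (c + real n)) \<longlonglongrightarrow> std_normal_density c"
    using tendsto_diff[OF tendsto_const std_normal_density_shift_tendsto_0] by simp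
  ultimately show ?thesis using LIMSEQ_unique by simp
qed

lemma integral_std_normal_sgn_affine_times_id:
  fixes a s :: real
  shows "(\<integral>t. sgn (a * t + s) * t \<partial>std_normal)
    = (if a = 0 then 0 else 2 * sgn a * std_normal_density (s / a))"
proof -
  have odd: "(\<integral>t. std_normal_density t * t \<partial>lborel) = 0"
    using integral_std_normal_moment_odd[of 0] by simp
  have "(\<integral>t. sgn (a * t + s) * t \<partial>std_normal) = (\<integral>t. std_normal_density t * (sgn (a * t + s) * t) \<partial>lborel)"
    by (rule integral_std_normal_eq_density) simp
  also have "\<dots> = (if a = 0 then 0 else 2 * sgn a * std_normal_density (s / a))"
  proof (cases "a = 0")
    case True
    then show ?thesis
      using odd integral_mult_right_zero[of lborel "sgn s" "\<lambda>t. std_normal_density t * t"]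
      by (simp add: mult_ac)
  next
    case False
    define c where "c = - s / a"
    \<comment> \<open>off the null set \<open>{c}\<close>, \<open>sgn (a * t + s)\<close> is \<open>sgn a\<close> above \<open>c\<close> and \<open>- sgn a\<close> below\<close>
    have "AE t in lborel. std_normal_density t * (sgn (a * t + s) * t)
       = sgn a * (2 * (std_normal_density t * t * indicator {c..} t) - std_normal_density t * t)"
      using AE_lborel_singleton[of c]
    proof (rule AE_mp, intro AE_I2 impI)
      fix t assume "t \<noteq> c"
      moreover have "a * t + s = a * (t - c)" using False unfolding c_def by (simp add: field_simps)
      ultimately have "sgn (a * t + s) = sgn a * (if c \<le> t then 1 else -1)"
        by (auto simp: sgn_mult)
      then show "std_normal_density t * (sgn (a * t + s) * t)
          = sgn a * (2 * (std_normal_density t * t * indicator {c..} t) - std_normal_density t * t)"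
        by (auto simp: indicator_def algebra_simps)
    qed
    then have "(\<integral>t. std_normal_density t * (sgn (a * t + s) * t) \<partial>lborel)
        = (\<integral>t. sgn a * (2 * (std_normal_density t * t * indicator {c..} t) - std_normal_density t * t) \<partial>lborel)"
      by (rule integral_cong_AE[rotated 2]) auto
    also have "\<dots> = 2 * sgn a * std_normal_density c"
    proof -
      have "integrable lborel (\<lambda>t. std_normal_density t * t * indicator {c..} t)"
        by (rule Bochner_Integration.integrable_bound[OF integrable_std_normal_density_times_id])
          (auto simp: indicator_def)
      then show ?thesis
        using integrable_std_normal_density_times_id odd
        by (simp add: integral_std_normal_density_times_id_above)
    qed
    also have "std_normal_density c = std_normal_density (s / a)"
      unfolding c_def std_normal_density_def by (simp add: power2_eq_square)
    finally show ?thesis using False by simp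
  qed
  finally show ?thesis .
qed

interpretation std_normal_product: product_sigma_finite "\<lambda>_::'i. std_normal"
  unfolding product_sigma_finite_def
  using prob_space_std_normal prob_space_imp_sigma_finite by blast

lemma prob_space_std_normal_PiM: "prob_space (PiM J (\<lambda>_. std_normal))"
  by (rule prob_space_PiM) (rule prob_space_std_normal)

lemma integrable_bounded_std_normal_PiM:
  fixes f :: "('i \<Rightarrow> real) \<Rightarrow> 'b::{banach, second_countable_topology}"
  assumes "f \<in> borel_measurable (PiM J (\<lambda>_. std_normal))" "\<And>x. norm (f x) \<le> B"
  shows "integrable (PiM J (\<lambda>_. std_normal)) f"
proof -
  interpret P: prob_space "PiM J (\<lambda>_. std_normal)" by (rule prob_space_std_normal_PiM)
  show ?thesis using assms by (intro P.integrable_const_bound[where B = B]) auto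
qed

lemma integrable_std_normal_PiM_component:
  assumes "j \<in> J"
  shows "integrable (PiM J (\<lambda>_. std_normal)) (\<lambda>\<omega>. \<omega> j)"
proof -
  have "distr (PiM J (\<lambda>_. std_normal)) std_normal (\<lambda>\<omega>. \<omega> j) = std_normal"
    by (rule distr_PiM_component) (use assms prob_space_std_normal in auto)
  moreover have "integrable std_normal (\<lambda>x. x)"
    using integrable_std_normal_density_times_id unfolding std_normal_def
    by (subst integrable_density) auto
  ultimately have "integrable (distr (PiM J (\<lambda>_. std_normal)) std_normal (\<lambda>\<omega>. \<omega> j)) (\<lambda>x. x)"
    by simp
  then show ?thesis
    by (subst (asm) integrable_distr_eq) (use assms in auto)
qed

lemma integrable_std_normal_PiM_bounded_times_component:
  fixes f :: "('i \<Rightarrow> real) \<Rightarrow> real"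
  assumes "j \<in> J" "f \<in> borel_measurable (PiM J (\<lambda>_. std_normal))" "\<And>x. \<bar>f x\<bar> \<le> B"
  shows "integrable (PiM J (\<lambda>_. std_normal)) (\<lambda>\<omega>. f \<omega> * \<omega> j)"
proof (rule Bochner_Integration.integrable_bound[where f = "\<lambda>\<omega>. B * \<omega> j"])
  show "integrable (PiM J (\<lambda>_. std_normal)) (\<lambda>\<omega>. B * \<omega> j)"
    using integrable_std_normal_PiM_component[OF assms(1)] by simp
  have "\<bar>f x\<bar> \<le> \<bar>B\<bar>" for x
    using assms(3) abs_ge_self order_trans by blast
  then show "AE x in PiM J (\<lambda>_. std_normal). norm (f x * x j) \<le> norm (B * x j)"
    by (intro AE_I2) (simp add: abs_mult mult_right_mono)
qed (use assms(1,2) in measurable)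

lemma integral_std_normal_PiM_exp_square:
  fixes a :: "'i \<Rightarrow> real"
  assumes "finite J" "\<alpha> > 0"
  shows "(\<integral>\<omega>. exp (- \<alpha> * (s + (\<Sum>i\<in>J. a i * \<omega> i))\<^sup>2) \<partial>PiM J (\<lambda>_. std_normal))
     = exp (- \<alpha> * s\<^sup>2 / (1 + 2 * \<alpha> * (\<Sum>i\<in>J. (a i)\<^sup>2))) / sqrt (1 + 2 * \<alpha> * (\<Sum>i\<in>J. (a i)\<^sup>2))"
  using assms
proof (induction J arbitrary: s \<alpha> rule: finite_induct)
  case empty
  show ?case by (simp add: PiM_empty)
next
  case (insert i J)
  let ?A = "\<Sum>k\<in>J. (a k)\<^sup>2"
  define b where "b = 1 + 2 * \<alpha> * (a i)\<^sup>2"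
  have b: "b > 0" unfolding b_def using insert.prems by (simp add: add_pos_nonneg)
  have int: "integrable (PiM (insert i J) (\<lambda>_. std_normal))
      (\<lambda>\<omega>. exp (- \<alpha> * (s + (\<Sum>k\<in>insert i J. a k * \<omega> k))\<^sup>2))"
    by (rule integrable_bounded_std_normal_PiM[where B = 1]) (use insert.prems in auto)
  have inner: "(\<integral>y. exp (- \<alpha> * (s + (\<Sum>k\<in>insert i J. a k * (x(i := y)) k))\<^sup>2) \<partial>std_normal)
      = exp (- (\<alpha> / b) * (s + (\<Sum>k\<in>J. a k * x k))\<^sup>2) / sqrt b" for x
  proof -
    have "(\<Sum>k\<in>J. a k * (x(i := y)) k) = (\<Sum>k\<in>J. a k * x k)" for y
      using insert.hyps by (intro sum.cong) auto
    then have "(\<Sum>k\<in>insert i J. a k * (x(i := y)) k) = (\<Sum>k\<in>J. a k * x k) + a i * y" for y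
      using insert.hyps by (simp add: add.commute)
    then show ?thesis
      using integral_std_normal_exp_square[OF insert.prems, of "s + (\<Sum>k\<in>J. a k * x k)" "a i"]
      by (simp add: b_def ac_simps)
  qed
  have "(\<integral>\<omega>. exp (- \<alpha> * (s + (\<Sum>k\<in>insert i J. a k * \<omega> k))\<^sup>2) \<partial>PiM (insert i J) (\<lambda>_. std_normal))
     = (\<integral>x. exp (- (\<alpha> / b) * (s + (\<Sum>k\<in>J. a k * x k))\<^sup>2) / sqrt b \<partial>PiM J (\<lambda>_. std_normal))"
    unfolding std_normal_product.product_integral_insert[OF insert.hyps int] inner ..
  also have "\<dots> = exp (- (\<alpha> / b) * s\<^sup>2 / (1 + 2 * (\<alpha> / b) * ?A)) / sqrt (1 + 2 * (\<alpha> / b) * ?A) / sqrt b"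
    using insert.IH[of "\<alpha> / b" s] insert.prems b by simp
  also have "\<dots> = exp (- \<alpha> * s\<^sup>2 / (1 + 2 * \<alpha> * (\<Sum>k\<in>insert i J. (a k)\<^sup>2)))
      / sqrt (1 + 2 * \<alpha> * (\<Sum>k\<in>insert i J. (a k)\<^sup>2))"
  proof -
    have "1 + 2 * (\<alpha> / b) * ?A = (1 + 2 * \<alpha> * (\<Sum>k\<in>insert i J. (a k)\<^sup>2)) / b"
      using b insert.hyps unfolding b_def by (simp add: field_simps)
    moreover have "1 + 2 * \<alpha> * (\<Sum>k\<in>insert i J. (a k)\<^sup>2) > 0"
      using insert.prems by (simp add: add_pos_nonneg sum_nonneg)
    ultimately show ?thesis using b by (simp add: real_sqrt_divide)
  qed
  finally show ?case .
qed

lemma integral_std_normal_PiM_density_linear: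
  fixes a :: "'i \<Rightarrow> real"
  assumes "finite J" "c \<noteq> 0"
  shows "(\<integral>\<omega>. std_normal_density ((\<Sum>i\<in>J. a i * \<omega> i) / c) \<partial>PiM J (\<lambda>_. std_normal))
    = \<bar>c\<bar> / (sqrt (2 * pi) * sqrt (c\<^sup>2 + (\<Sum>i\<in>J. (a i)\<^sup>2)))"
proof -
  let ?A = "\<Sum>i\<in>J. (a i)\<^sup>2"
  have c: "c\<^sup>2 > 0" using assms(2) by simp
  have "(\<integral>\<omega>. std_normal_density ((\<Sum>i\<in>J. a i * \<omega> i) / c) \<partial>PiM J (\<lambda>_. std_normal))
      = (\<integral>\<omega>. exp (- (1 / (2 * c\<^sup>2)) * (0 + (\<Sum>i\<in>J. a i * \<omega> i))\<^sup>2) \<partial>PiM J (\<lambda>_. std_normal)) / sqrt (2 * pi)"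
    by (simp add: std_normal_density_def power_divide ac_simps)
  also have "\<dots> = 1 / sqrt (1 + 2 * (1 / (2 * c\<^sup>2)) * ?A) / sqrt (2 * pi)"
    using integral_std_normal_PiM_exp_square[OF assms(1), of "1 / (2 * c\<^sup>2)" 0 a] c by simp
  also have "1 + 2 * (1 / (2 * c\<^sup>2)) * ?A = (c\<^sup>2 + ?A) / c\<^sup>2"
    using c by (simp add: field_simps)
  finally show ?thesis by (simp add: real_sqrt_divide)
qed

text \<open>
  Integrating out the coordinate \<open>\<omega> j\<close> first reduces the correlation of the sign of a Gaussian
  linear form with \<open>\<omega> j\<close> to a Gaussian integral of a Gaussian density.
\<close>

lemma integral_std_normal_PiM_sgn_linear_times_component:
  fixes a :: "'i \<Rightarrow> real"
  assumes "finite J" "j \<in> J"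
  shows "(\<integral>\<omega>. sgn (\<Sum>i\<in>J. a i * \<omega> i) * \<omega> j \<partial>PiM J (\<lambda>_. std_normal))
     = sqrt (2 / pi) * a j / sqrt (\<Sum>i\<in>J. (a i)\<^sup>2)"
proof -
  define J' where "J' = J - {j}"
  have J: "J = insert j J'" "j \<notin> J'" "finite J'"
    using assms unfolding J'_def by auto
  let ?S = "\<lambda>x. \<Sum>k\<in>J'. a k * x k"
  let ?A = "\<Sum>k\<in>J'. (a k)\<^sup>2"
  have int: "integrable (PiM (insert j J') (\<lambda>_. std_normal))
      (\<lambda>\<omega>. sgn (\<Sum>i\<in>insert j J'. a i * \<omega> i) * \<omega> j)"
    by (rule integrable_std_normal_PiM_bounded_times_component[where B = 1]) (auto simp: sgn_if)
  have inner: "(\<integral>y. sgn (\<Sum>i\<in>insert j J'. a i * (x(j := y)) i) * (x(j := y)) j \<partial>std_normal)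
      = (if a j = 0 then 0 else 2 * sgn (a j) * std_normal_density (?S x / a j))" for x
  proof -
    have "(\<Sum>k\<in>J'. a k * (x(j := y)) k) = ?S x" for y
      using J by (intro sum.cong) auto
    then have "(\<Sum>i\<in>insert j J'. a i * (x(j := y)) i) = a j * y + ?S x" for y
      using J by simp
    then show ?thesis by (simp add: integral_std_normal_sgn_affine_times_id)
  qed
  have "(\<integral>\<omega>. sgn (\<Sum>i\<in>J. a i * \<omega> i) * \<omega> j \<partial>PiM J (\<lambda>_. std_normal))
      = (\<integral>x. (if a j = 0 then 0 else 2 * sgn (a j) * std_normal_density (?S x / a j)) \<partial>PiM J' (\<lambda>_. std_normal))"
    unfolding J(1) std_normal_product.product_integral_insert[OF J(3,2) int] inner ..
  also have "\<dots> = sqrt (2 / pi) * a j / sqrt (\<Sum>i\<in>J. (a i)\<^sup>2)"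
  proof (cases "a j = 0")
    case False
    have "(\<integral>x. (if a j = 0 then 0 else 2 * sgn (a j) * std_normal_density (?S x / a j)) \<partial>PiM J' (\<lambda>_. std_normal))
        = 2 / sqrt (2 * pi) * (sgn (a j) * \<bar>a j\<bar>) / sqrt ((a j)\<^sup>2 + ?A)"
      using False by (simp add: integral_std_normal_PiM_density_linear[OF J(3) False])
    also have "2 / sqrt (2 * pi) = sqrt (2 / pi)"
      by (simp add: real_sqrt_divide real_sqrt_mult field_simps)
    also have "(a j)\<^sup>2 + ?A = (\<Sum>i\<in>J. (a i)\<^sup>2)"
      using J by simp
    finally show ?thesis by (simp add: sgn_mult_abs)
  qed simp
  finally show ?thesis .
qed

lemma integral_std_normal_PiM_sgn_linear_times_linear:
  fixes a b :: "'i \<Rightarrow> real"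
  assumes "finite J"
  shows "integrable (PiM J (\<lambda>_. std_normal)) (\<lambda>\<omega>. sgn (\<Sum>i\<in>J. a i * \<omega> i) * (\<Sum>i\<in>J. b i * \<omega> i))"
    and "(\<integral>\<omega>. sgn (\<Sum>i\<in>J. a i * \<omega> i) * (\<Sum>i\<in>J. b i * \<omega> i) \<partial>PiM J (\<lambda>_. std_normal))
      = sqrt (2 / pi) * (\<Sum>i\<in>J. a i * b i) / sqrt (\<Sum>i\<in>J. (a i)\<^sup>2)"
proof -
  have expand: "sgn (\<Sum>i\<in>J. a i * \<omega> i) * (\<Sum>i\<in>J. b i * \<omega> i)
      = (\<Sum>j\<in>J. b j * (sgn (\<Sum>i\<in>J. a i * \<omega> i) * \<omega> j))" for \<omega>
    by (subst sum_distrib_left) (simp add: mult_ac)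
  have int: "integrable (PiM J (\<lambda>_. std_normal)) (\<lambda>\<omega>. b j * (sgn (\<Sum>i\<in>J. a i * \<omega> i) * \<omega> j))"
    if "j \<in> J" for j
    using integrable_std_normal_PiM_bounded_times_component[OF that, of "\<lambda>\<omega>. sgn (\<Sum>i\<in>J. a i * \<omega> i)" 1]
    by (auto simp: sgn_if)
  then show "integrable (PiM J (\<lambda>_. std_normal)) (\<lambda>\<omega>. sgn (\<Sum>i\<in>J. a i * \<omega> i) * (\<Sum>i\<in>J. b i * \<omega> i))"
    unfolding expand by auto
  have "(\<integral>\<omega>. sgn (\<Sum>i\<in>J. a i * \<omega> i) * (\<Sum>i\<in>J. b i * \<omega> i) \<partial>PiM J (\<lambda>_. std_normal))
      = (\<Sum>j\<in>J. \<integral>\<omega>. b j * (sgn (\<Sum>i\<in>J. a i * \<omega> i) * \<omega> j) \<partial>PiM J (\<lambda>_. std_normal))"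
    unfolding expand by (rule Bochner_Integration.integral_sum) (rule int)
  also have "\<dots> = (\<Sum>j\<in>J. b j * (sqrt (2 / pi) * a j / sqrt (\<Sum>i\<in>J. (a i)\<^sup>2)))"
    using assms by (simp add: integral_std_normal_PiM_sgn_linear_times_component)
  also have "\<dots> = sqrt (2 / pi) * (\<Sum>i\<in>J. a i * b i) / sqrt (\<Sum>i\<in>J. (a i)\<^sup>2)"
    by (simp add: sum_distrib_left sum_divide_distrib mult_ac)
  finally show "(\<integral>\<omega>. sgn (\<Sum>i\<in>J. a i * \<omega> i) * (\<Sum>i\<in>J. b i * \<omega> i) \<partial>PiM J (\<lambda>_. std_normal))
      = sqrt (2 / pi) * (\<Sum>i\<in>J. a i * b i) / sqrt (\<Sum>i\<in>J. (a i)\<^sup>2)" .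
qed
section \<open>Correlations of one-bit quantized complex Gaussian variables\<close>

text \<open>
  The transmitted signal and all received signals are linear combinations \<open>gauss_comb\<close> of the
  standard complex Gaussians \<open>gauss_cplx \<omega> n q\<close>; their real and imaginary parts are real linear
  forms in the coordinates of \<open>\<omega>\<close>, with weights \<open>re_weight\<close> and \<open>im_weight\<close>.
\<close>

definition gauss_index :: "nat \<Rightarrow> nat \<Rightarrow> (nat \<times> nat \<times> bool) set" where
  "gauss_index N Q = {..N} \<times> {..<Q} \<times> UNIV"

definition gauss_cplx :: "(nat \<times> nat \<times> bool \<Rightarrow> real) \<Rightarrow> nat \<Rightarrow> nat \<Rightarrow> complex" where
  "gauss_cplx \<omega> n q = Complex (\<omega> (n, q, True)) (\<omega> (n, q, False))"

definition gauss_comb :: "nat \<Rightarrow> nat \<Rightarrow> (nat \<Rightarrow> nat \<Rightarrow> complex) \<Rightarrow> (nat \<times> nat \<times> bool \<Rightarrow> real) \<Rightarrow> complex" where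
  "gauss_comb N Q c \<omega> = (\<Sum>n\<le>N. \<Sum>q<Q. c n q * gauss_cplx \<omega> n q)"

definition re_weight :: "(nat \<Rightarrow> nat \<Rightarrow> complex) \<Rightarrow> nat \<times> nat \<times> bool \<Rightarrow> real" where
  "re_weight c = (\<lambda>(n, q, b). if b then Re (c n q) else - Im (c n q))"

definition im_weight :: "(nat \<Rightarrow> nat \<Rightarrow> complex) \<Rightarrow> nat \<times> nat \<times> bool \<Rightarrow> real" where
  "im_weight c = (\<lambda>(n, q, b). if b then Im (c n q) else Re (c n q))"

lemma Omega_eq_PiM_gauss_index: "Omega N Q = PiM (gauss_index N Q) (\<lambda>_. std_normal)"
  unfolding Omega_def gauss_index_def ..

lemma finite_gauss_index [simp]: "finite (gauss_index N Q)"
  unfolding gauss_index_def by simp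

lemma sum_gauss_index:
  "(\<Sum>i\<in>gauss_index N Q. g i) = (\<Sum>n\<le>N. \<Sum>q<Q. g (n, q, True) + g (n, q, False))"
proof -
  have "(\<Sum>i\<in>gauss_index N Q. g i) = (\<Sum>n\<le>N. \<Sum>r\<in>{..<Q} \<times> UNIV. g (n, r))"
    unfolding gauss_index_def by (subst sum.cartesian_product) simp
  also have "\<dots> = (\<Sum>n\<le>N. \<Sum>q<Q. \<Sum>b\<in>UNIV. g (n, q, b))"
    by (subst sum.cartesian_product) simp
  finally show ?thesis by (simp add: UNIV_bool add.commute)
qed

lemma Re_gauss_comb: "Re (gauss_comb N Q c \<omega>) = (\<Sum>i\<in>gauss_index N Q. re_weight c i * \<omega> i)"
  unfolding sum_gauss_index gauss_comb_def re_weight_def gauss_cplx_def by (simp add: algebra_simps)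

lemma Im_gauss_comb: "Im (gauss_comb N Q c \<omega>) = (\<Sum>i\<in>gauss_index N Q. im_weight c i * \<omega> i)"
  unfolding sum_gauss_index gauss_comb_def im_weight_def gauss_cplx_def by (simp add: algebra_simps)

lemma sum_weight_square:
  "(\<Sum>i\<in>gauss_index N Q. (re_weight c i)\<^sup>2) = (\<Sum>n\<le>N. \<Sum>q<Q. (cmod (c n q))\<^sup>2)"
  "(\<Sum>i\<in>gauss_index N Q. (im_weight c i)\<^sup>2) = (\<Sum>n\<le>N. \<Sum>q<Q. (cmod (c n q))\<^sup>2)"
  unfolding sum_gauss_index re_weight_def im_weight_def by (simp_all add: cmod_power2 add.commute)

lemma sum_weight_times_weight:
  "(\<Sum>i\<in>gauss_index N Q. re_weight c i * re_weight d i) = Re (\<Sum>n\<le>N. \<Sum>q<Q. c n q * cnj (d n q))"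
  "(\<Sum>i\<in>gauss_index N Q. im_weight c i * im_weight d i) = Re (\<Sum>n\<le>N. \<Sum>q<Q. c n q * cnj (d n q))"
  "(\<Sum>i\<in>gauss_index N Q. im_weight c i * re_weight d i) - (\<Sum>i\<in>gauss_index N Q. re_weight c i * im_weight d i)
    = 2 * Im (\<Sum>n\<le>N. \<Sum>q<Q. c n q * cnj (d n q))"
  unfolding sum_gauss_index re_weight_def im_weight_def
  by (simp_all add: add.commute sum_subtractf[symmetric] sum_distrib_left algebra_simps)

lemma borel_measurable_cnj [measurable (raw)]:
  "f \<in> borel_measurable M \<Longrightarrow> (\<lambda>x. cnj (f x)) \<in> borel_measurable M"
  by (rule borel_measurable_continuous_on[where f = cnj]) (auto intro: continuous_intros)

lemma measurable_csgn_gauss_comb [measurable]: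
  "(\<lambda>\<omega>. csgn (gauss_comb N Q c \<omega>)) \<in> borel_measurable (Omega N Q)"
  unfolding csgn_def Re_gauss_comb Im_gauss_comb Complex_eq Omega_eq_PiM_gauss_index by measurable

lemma norm_csgn_le_1: "cmod (csgn z) \<le> 1"
proof -
  have "(cmod (Complex (sgn (Re z)) (sgn (Im z))))\<^sup>2 \<le> 2"
    unfolding cmod_power2 by (auto simp: sgn_if)
  then show ?thesis unfolding csgn_def by (simp add: norm_divide real_le_rsqrt)
qed

lemma integrable_csgn_gauss_comb_times_cnj_csgn:
  "integrable (Omega N Q) (\<lambda>\<omega>. csgn (gauss_comb N Q c \<omega>) * cnj (csgn (gauss_comb N Q d \<omega>)))"
  unfolding Omega_eq_PiM_gauss_index
proof (rule integrable_bounded_std_normal_PiM[where B = 1])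
  show "(\<lambda>\<omega>. csgn (gauss_comb N Q c \<omega>) * cnj (csgn (gauss_comb N Q d \<omega>)))
      \<in> borel_measurable (PiM (gauss_index N Q) (\<lambda>_. std_normal))"
    using measurable_csgn_gauss_comb[of N Q c] measurable_csgn_gauss_comb[of N Q d]
    unfolding Omega_eq_PiM_gauss_index by measurable
  show "norm (csgn (gauss_comb N Q c x) * cnj (csgn (gauss_comb N Q d x))) \<le> 1" for x
    using norm_csgn_le_1[of "gauss_comb N Q c x"] norm_csgn_le_1[of "gauss_comb N Q d x"]
    by (simp add: norm_mult mult_le_one)
qed

text \<open>
  Real and imaginary part of the quantized variable are signs of real Gaussian linear forms, so
  the complex correlation splits into four real ones.
\<close>

lemma integral_csgn_gauss_comb_times_cnj:
  fixes N Q :: nat and c d :: "nat \<Rightarrow> nat \<Rightarrow> complex"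
  defines "S \<equiv> \<Sum>n\<le>N. \<Sum>q<Q. (cmod (c n q))\<^sup>2"
  shows "integrable (Omega N Q) (\<lambda>\<omega>. csgn (gauss_comb N Q c \<omega>) * cnj (gauss_comb N Q d \<omega>))"
    and "(\<integral>\<omega>. csgn (gauss_comb N Q c \<omega>) * cnj (gauss_comb N Q d \<omega>) \<partial>Omega N Q)
      = complex_of_real (2 / (sqrt pi * sqrt S)) * (\<Sum>n\<le>N. \<Sum>q<Q. c n q * cnj (d n q))"
proof -
  let ?M = "PiM (gauss_index N Q) (\<lambda>_. std_normal)"
  let ?P = "\<Sum>n\<le>N. \<Sum>q<Q. c n q * cnj (d n q)"
  let ?lin = "\<lambda>a \<omega>. \<Sum>i\<in>gauss_index N Q. a i * \<omega> i"
  define corr where "corr a b = (\<lambda>\<omega>. sgn (?lin a \<omega>) * ?lin b \<omega>)"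
    for a b :: "nat \<times> nat \<times> bool \<Rightarrow> real"
  define A1 where "A1 = (\<lambda>\<omega>. corr (re_weight c) (re_weight d) \<omega> + corr (im_weight c) (im_weight d) \<omega>)"
  define A2 where "A2 = (\<lambda>\<omega>. corr (im_weight c) (re_weight d) \<omega> - corr (re_weight c) (im_weight d) \<omega>)"
  have pointwise: "csgn (gauss_comb N Q c \<omega>) * cnj (gauss_comb N Q d \<omega>)
      = complex_of_real (A1 \<omega> / sqrt 2) + \<i> * complex_of_real (A2 \<omega> / sqrt 2)" for \<omega>
    unfolding A1_def A2_def corr_def csgn_def
    by (simp add: complex_eq_iff Re_gauss_comb[symmetric] Im_gauss_comb[symmetric] Re_divide Im_divide
        power2_eq_square add_divide_distrib diff_divide_distrib ring_distribs)
  have int: "integrable ?M (corr a b)" for a b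
    unfolding corr_def by (rule integral_std_normal_PiM_sgn_linear_times_linear) simp
  have corr_integral: "integral\<^sup>L ?M (corr a b) = sqrt (2 / pi) * (\<Sum>i\<in>gauss_index N Q. a i * b i)
      / sqrt (\<Sum>i\<in>gauss_index N Q. (a i)\<^sup>2)" for a b
    unfolding corr_def by (rule integral_std_normal_PiM_sgn_linear_times_linear) simp
  have iA: "integrable ?M A1" "integrable ?M A2"
    unfolding A1_def A2_def using int by auto
  then show "integrable (Omega N Q) (\<lambda>\<omega>. csgn (gauss_comb N Q c \<omega>) * cnj (gauss_comb N Q d \<omega>))"
    unfolding Omega_eq_PiM_gauss_index pointwise by auto
  have "integral\<^sup>L ?M A1 = sqrt (2 / pi) * (2 * Re ?P) / sqrt S"
    unfolding A1_def using int by (simp add: corr_integral sum_weight_square sum_weight_times_weight S_def)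
  moreover have "integral\<^sup>L ?M A2 = sqrt (2 / pi) * (2 * Im ?P) / sqrt S"
    unfolding A2_def using int
    by (simp add: corr_integral sum_weight_square S_def diff_divide_distrib[symmetric]
        right_diff_distrib[symmetric] sum_weight_times_weight(3))
  moreover have "sqrt (2 / pi) * (2 * x) / sqrt S / sqrt 2 = 2 / (sqrt pi * sqrt S) * x" for x
    by (simp add: real_sqrt_divide field_simps)
  ultimately show "(\<integral>\<omega>. csgn (gauss_comb N Q c \<omega>) * cnj (gauss_comb N Q d \<omega>) \<partial>Omega N Q)
      = complex_of_real (2 / (sqrt pi * sqrt S)) * ?P"
    unfolding Omega_eq_PiM_gauss_index pointwise using iA by (simp add: complex_eq_iff)
qed

lemma norm_dft_square: "Q > 0 \<Longrightarrow> (cmod (dft Q p q))\<^sup>2 = 1 / real Q"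
  unfolding dft_def by (simp add: norm_divide power_divide)

lemma norm_dft_adj_square: "Q > 0 \<Longrightarrow> (cmod (dft_adj Q p q))\<^sup>2 = 1 / real Q"
  unfolding dft_adj_def by (simp add: norm_dft_square)

lemma cis_root_of_unity_neq_1:
  assumes "p < Q" "q < Q" "p \<noteq> q"
  shows "cis (2 * pi * (real q - real p) / real Q) \<noteq> 1"
proof
  assume "cis (2 * pi * (real q - real p) / real Q) = 1"
  moreover have "cis (2 * pi * (real q - real p) / real Q) = cis (2 * pi * real q / real Q) / cis (2 * pi * real p / real Q)"
    by (simp add: cis_divide diff_divide_distrib right_diff_distrib)
  ultimately have "cis (2 * pi * real q / real Q) = cis (2 * pi * real p / real Q)"
    by simp
  then show False
    using bij_betw_imp_inj_on[OF Complex.bij_betw_roots_unity[of Q]] assms by (auto simp: inj_on_def)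
qed

lemma dft_times_dft_adj_eq_power:
  "dft Q p k * dft_adj Q k q = cis (2 * pi * (real q - real p) / real Q) ^ k / of_real (real Q)"
proof -
  have "dft Q p k * dft_adj Q k q
      = cis (- 2 * pi * real p * real k / real Q) * cis (2 * pi * real q * real k / real Q)
        / (of_real (sqrt (real Q)) * of_real (sqrt (real Q)))"
    unfolding dft_adj_def dft_def by (simp add: cis_cnj)
  also have "cis (- 2 * pi * real p * real k / real Q) * cis (2 * pi * real q * real k / real Q)
      = cis (real k * (2 * pi * (real q - real p) / real Q))"
    unfolding cis_mult by (rule arg_cong[where f = cis]) (simp add: divide_inverse algebra_simps)
  also have "of_real (sqrt (real Q)) * of_real (sqrt (real Q)) = (of_real (real Q) :: complex)"
    by (simp flip: of_real_mult)
  finally show ?thesis by (simp only: Complex.DeMoivre)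
qed

lemma dft_times_dft_adj:
  assumes Q: "Q > 0" and p: "p < Q" and q: "q < Q"
  shows "(\<Sum>k<Q. dft Q p k * dft_adj Q k q) = (if p = q then 1 else 0)"
proof -
  define z where "z = cis (2 * pi * (real q - real p) / real Q)"
  have "(\<Sum>k<Q. dft Q p k * dft_adj Q k q) = (\<Sum>k<Q. z ^ k) / of_real (real Q)"
    unfolding dft_times_dft_adj_eq_power z_def by (simp add: sum_divide_distrib)
  also have "\<dots> = (if p = q then 1 else 0)"
  proof (cases "p = q")
    case True
    then have "z = 1" unfolding z_def by simp
    then show ?thesis using True Q by simp
  next
    case False
    have "z \<noteq> 1" unfolding z_def by (rule cis_root_of_unity_neq_1[OF p q False])
    moreover have "z ^ Q = cis (2 * pi * real_of_int (int q - int p))"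
      unfolding z_def Complex.DeMoivre using Q by simp
    then have "z ^ Q = 1" by (simp only: cis_multiple_2pi Ints_of_int)
    ultimately show ?thesis using False by (simp add: sum_gp_strict)
  qed
  finally show ?thesis .
qed

section \<open>Sesquilinear forms\<close>

definition sesq :: "nat \<Rightarrow> (nat \<Rightarrow> nat \<Rightarrow> complex) \<Rightarrow> (nat \<Rightarrow> complex) \<Rightarrow> (nat \<Rightarrow> complex) \<Rightarrow> complex" where
  "sesq K M v w = (\<Sum>a<K. \<Sum>b<K. cnj (v a) * M a b * w b)"

definition cinner :: "nat \<Rightarrow> (nat \<Rightarrow> complex) \<Rightarrow> (nat \<Rightarrow> complex) \<Rightarrow> complex" where
  "cinner K v u = (\<Sum>a<K. cnj (v a) * u a)"

definition mvec :: "nat \<Rightarrow> (nat \<Rightarrow> nat \<Rightarrow> complex) \<Rightarrow> (nat \<Rightarrow> complex) \<Rightarrow> nat \<Rightarrow> complex" where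
  "mvec K M v = (\<lambda>a. \<Sum>b<K. M a b * v b)"

definition sqnorm :: "nat \<Rightarrow> (nat \<Rightarrow> complex) \<Rightarrow> real" where
  "sqnorm K v = (\<Sum>a<K. (cmod (v a))\<^sup>2)"

lemma sesq_eq_cinner_mvec: "sesq K M v w = cinner K v (mvec K M w)"
  unfolding sesq_def cinner_def mvec_def by (simp add: sum_distrib_left mult.assoc)

lemma sesq_add_scaled:
  "sesq K M (\<lambda>a. v a + c * w a) (\<lambda>a. v a + c * w a)
    = sesq K M v v + c * sesq K M v w + cnj c * sesq K M w v + (cnj c * c) * sesq K M w w"
  unfolding sesq_def by (simp add: algebra_simps sum.distrib sum_distrib_left)

lemma sesq_swap_if_real:
  assumes real: "\<And>v. Im (sesq K M v v) = 0"
  shows "sesq K M w v = cnj (sesq K M v w)"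
proof -
  have e1: "Im (sesq K M v w + sesq K M w v) = 0"
    using real[of "\<lambda>a. v a + 1 * w a"] real[of v] real[of w] unfolding sesq_add_scaled by simp
  have e2: "Re (sesq K M v w - sesq K M w v) = 0"
    using real[of "\<lambda>a. v a + \<i> * w a"] real[of v] real[of w] unfolding sesq_add_scaled by simp
  show ?thesis using e1 e2 by (simp add: complex_eq_iff)
qed

lemma sesq_quadratic_nonneg:
  assumes real: "\<And>v. Im (sesq K M v v) = 0" and pos: "\<And>v. Re (sesq K M v v) \<ge> 0"
  shows "0 \<le> Re (sesq K M v v) - 2 * t * (cmod (sesq K M w v))\<^sup>2
    + t\<^sup>2 * (cmod (sesq K M w v))\<^sup>2 * Re (sesq K M w w)"
proof -
  define x where "x = sesq K M w v"
  have hx: "sesq K M v w = cnj x" unfolding x_def using sesq_swap_if_real[OF real, of v w] by simp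
  have "0 \<le> Re (sesq K M (\<lambda>a. v a + (- of_real t * x) * w a) (\<lambda>a. v a + (- of_real t * x) * w a))"
    by (rule pos)
  also have "\<dots> = Re (sesq K M v v) - 2 * t * (cmod x)\<^sup>2 + t\<^sup>2 * (cmod x)\<^sup>2 * Re (sesq K M w w)"
  proof -
    have "cnj x * x = complex_of_real ((cmod x)\<^sup>2)" using complex_norm_square[of x] by (simp add: mult.commute)
    moreover have "x * cnj x = complex_of_real ((cmod x)\<^sup>2)" using complex_norm_square[of x] by simp
    moreover have "Re (complex_of_real r * z) = r * Re z" for r z by simp
    moreover have hc: "cmod x * cmod x = Re x * Re x + Im x * Im x"
      using cmod_power2[of x] by (simp add: power2_eq_square)
    ultimately show ?thesis unfolding sesq_add_scaled hx x_def[symmetric]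
      by (simp add: power2_eq_square algebra_simps hc)
  qed
  finally show ?thesis unfolding x_def .
qed

lemma sesq_cauchy_schwarz:
  assumes real: "\<And>v. Im (sesq K M v v) = 0" and pos: "\<And>v. Re (sesq K M v v) \<ge> 0"
  shows "(cmod (sesq K M v w))\<^sup>2 \<le> Re (sesq K M v v) * Re (sesq K M w w)"
proof -
  define x where "x = sesq K M w v"
  have hx: "sesq K M v w = cnj x" unfolding x_def using sesq_swap_if_real[OF real, of v w] by simp
  have key: "0 \<le> Re (sesq K M v v) - 2 * t * (cmod x)\<^sup>2 + t\<^sup>2 * (cmod x)\<^sup>2 * Re (sesq K M w w)" for t :: real
    unfolding x_def by (rule sesq_quadratic_nonneg[OF real pos])
  show ?thesis
  proof (cases "Re (sesq K M w w) = 0")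
    case True
    have "(cmod x)\<^sup>2 = 0"
    proof (rule ccontr)
      assume ne: "(cmod x)\<^sup>2 \<noteq> 0"
      then have p: "(cmod x)\<^sup>2 > 0" by simp
      have "0 \<le> Re (sesq K M v v) - 2 * ((Re (sesq K M v v) + 1) / (2 * (cmod x)\<^sup>2)) * (cmod x)\<^sup>2"
        using key[of "(Re (sesq K M v v) + 1) / (2 * (cmod x)\<^sup>2)"] True by simp
      also have "\<dots> = -1" using p by (simp add: field_simps)
      finally show False by simp
    qed
    then show ?thesis using hx pos[of v] pos[of w] by simp
  next
    case False
    then have qw: "Re (sesq K M w w) > 0" using pos[of w] by simp
    have "0 \<le> Re (sesq K M v v) - 2 * (1 / Re (sesq K M w w)) * (cmod x)\<^sup>2 + (1 / Re (sesq K M w w))\<^sup>2 * (cmod x)\<^sup>2 * Re (sesq K M w w)"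
      by (rule key)
    also have "\<dots> = Re (sesq K M v v) - (cmod x)\<^sup>2 / Re (sesq K M w w)"
      using qw by (simp add: field_simps power2_eq_square)
    finally have "(cmod x)\<^sup>2 / Re (sesq K M w w) \<le> Re (sesq K M v v)" by simp
    then have "(cmod x)\<^sup>2 \<le> Re (sesq K M v v) * Re (sesq K M w w)"
      using qw by (simp add: divide_le_eq)
    then show ?thesis using hx by simp
  qed
qed


lemma sqnorm_nonneg: "sqnorm K v \<ge> 0"
  unfolding sqnorm_def by (simp add: sum_nonneg)

lemma norm_le_sqrt_sqnorm:
  assumes "a < K" shows "cmod (v a) \<le> sqrt (sqnorm K v)"
proof -
  have "(cmod (v a))\<^sup>2 \<le> sqnorm K v"
    unfolding sqnorm_def using assms by (intro member_le_sum) auto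
  then show ?thesis by (metis norm_ge_zero real_le_rsqrt)
qed

lemma sqnorm_eq_0D:
  assumes "sqnorm K v = 0" "a < K" shows "v a = 0"
proof -
  have "(\<Sum>a<K. (cmod (v a))\<^sup>2) = 0" using assms(1) unfolding sqnorm_def .
  then have "\<forall>a\<in>{..<K}. (cmod (v a))\<^sup>2 = 0" by (subst (asm) sum_nonneg_eq_0_iff) auto
  then show ?thesis using assms(2) by simp
qed

lemma norm_sesq_le:
  "cmod (sesq K M v v) \<le> (\<Sum>a<K. \<Sum>b<K. cmod (M a b)) * sqnorm K v"
proof -
  let ?r = "sqrt (sqnorm K v)"
  have rr: "?r * ?r = sqnorm K v" using sqnorm_nonneg by simp
  have "cmod (sesq K M v v) \<le> (\<Sum>a<K. \<Sum>b<K. cmod (cnj (v a) * M a b * v b))"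
    unfolding sesq_def by (rule order_trans[OF norm_sum sum_mono[OF norm_sum]])
  also have "\<dots> \<le> (\<Sum>a<K. \<Sum>b<K. cmod (M a b) * (?r * ?r))"
  proof (intro sum_mono)
    fix a b assume "a \<in> {..<K}" "b \<in> {..<K}"
    then have "cmod (v a) \<le> ?r" "cmod (v b) \<le> ?r" by (auto intro: norm_le_sqrt_sqnorm)
    then have "cmod (v a) * cmod (v b) \<le> ?r * ?r" by (intro mult_mono) (auto simp: sqnorm_nonneg)
    then have "cmod (M a b) * (cmod (v a) * cmod (v b)) \<le> cmod (M a b) * (?r * ?r)"
      by (intro mult_left_mono) auto
    then show "cmod (cnj (v a) * M a b * v b) \<le> cmod (M a b) * (?r * ?r)"
      by (simp add: norm_mult mult_ac)
  qed
  also have "\<dots> = (\<Sum>a<K. \<Sum>b<K. cmod (M a b)) * sqnorm K v"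
    unfolding rr by (simp add: sum_distrib_right)
  finally show ?thesis .
qed

lemma sqnorm_mvec_le:
  "sqnorm K (mvec K M v) \<le> (\<Sum>a<K. (\<Sum>b<K. cmod (M a b))\<^sup>2) * sqnorm K v"
proof -
  let ?r = "sqrt (sqnorm K v)"
  have rr: "?r\<^sup>2 = sqnorm K v" using sqnorm_nonneg by simp
  have "sqnorm K (mvec K M v) = (\<Sum>a<K. (cmod (\<Sum>b<K. M a b * v b))\<^sup>2)"
    unfolding sqnorm_def mvec_def ..
  also have "\<dots> \<le> (\<Sum>a<K. ((\<Sum>b<K. cmod (M a b)) * ?r)\<^sup>2)"
  proof (intro sum_mono power_mono)
    fix a assume "a \<in> {..<K}"
    have "cmod (\<Sum>b<K. M a b * v b) \<le> (\<Sum>b<K. cmod (M a b * v b))" by (rule norm_sum)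
    also have "\<dots> \<le> (\<Sum>b<K. cmod (M a b) * ?r)"
      by (intro sum_mono) (auto simp: norm_mult intro!: mult_left_mono norm_le_sqrt_sqnorm)
    finally show "cmod (\<Sum>b<K. M a b * v b) \<le> (\<Sum>b<K. cmod (M a b)) * ?r"
      by (simp add: sum_distrib_right)
  qed auto
  also have "\<dots> = (\<Sum>a<K. (\<Sum>b<K. cmod (M a b))\<^sup>2) * sqnorm K v"
    unfolding power_mult_distrib rr by (simp add: sum_distrib_right)
  finally show ?thesis .
qed

lemma mvec_inverse_left:
  assumes "is_inverse K M B" "i < K"
  shows "mvec K M (mvec K B u) i = u i"
proof -
  have "mvec K M (mvec K B u) i = (\<Sum>k<K. \<Sum>j<K. M i k * B k j * u j)"
    unfolding mvec_def by (simp add: sum_distrib_left mult.assoc)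
  also have "\<dots> = (\<Sum>j<K. (\<Sum>k<K. M i k * B k j) * u j)"
    by (subst sum.swap) (simp add: sum_distrib_right)
  also have "\<dots> = (\<Sum>j<K. (if i = j then 1 else 0) * u j)"
    using assms unfolding is_inverse_def by (intro sum.cong) auto
  also have "\<dots> = (\<Sum>j<K. if i = j then u j else 0)" by (intro sum.cong) auto
  also have "\<dots> = u i" using assms(2) by simp
  finally show ?thesis .
qed

lemma mvec_inverse_right:
  assumes "is_inverse K M B" "i < K"
  shows "mvec K B (mvec K M u) i = u i"
proof -
  have "is_inverse K B M" using assms(1) unfolding is_inverse_def by blast
  then show ?thesis using mvec_inverse_left assms(2) by blast
qed

lemma cinner_cong:
  "(\<And>a. a < K \<Longrightarrow> v a = v' a) \<Longrightarrow> (\<And>a. a < K \<Longrightarrow> u a = u' a) \<Longrightarrow> cinner K v u = cinner K v' u'"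
  unfolding cinner_def by (intro sum.cong) auto

lemma sqnorm_cong: "(\<And>a. a < K \<Longrightarrow> u a = u' a) \<Longrightarrow> sqnorm K u = sqnorm K u'"
  unfolding sqnorm_def by (intro sum.cong) auto

lemma cinner_self: "cinner K v v = complex_of_real (sqnorm K v)"
proof -
  have "(\<Sum>a<K. cnj (v a) * v a) = (\<Sum>a<K. complex_of_real ((cmod (v a))\<^sup>2))"
    by (intro sum.cong refl) (metis complex_norm_square mult.commute)
  then show ?thesis unfolding cinner_def sqnorm_def by simp
qed

lemma sesq_coercive:
  assumes real: "\<And>v. Im (sesq K M v v) = 0" and pos: "\<And>v. Re (sesq K M v v) \<ge> 0"
    and inv: "is_inverse K M B"
  shows "\<exists>\<kappa>\<ge>0. \<forall>v. sqnorm K v \<le> \<kappa> * Re (sesq K M v v)"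
proof -
  define C where "C = (\<Sum>a<K. \<Sum>b<K. cmod (M a b))"
  define CB where "CB = (\<Sum>a<K. (\<Sum>b<K. cmod (B a b))\<^sup>2)"
  have C0: "C \<ge> 0" unfolding C_def by (simp add: sum_nonneg)
  have CB0: "CB \<ge> 0" unfolding CB_def by (simp add: sum_nonneg)
  have "sqnorm K v \<le> (CB * C) * Re (sesq K M v v)" for v
  proof -
    let ?w = "mvec K M v"
    have s1: "sesq K M ?w v = complex_of_real (sqnorm K ?w)"
      unfolding sesq_eq_cinner_mvec cinner_self ..
    have "(sqnorm K ?w)\<^sup>2 \<le> Re (sesq K M ?w ?w) * Re (sesq K M v v)"
      using sesq_cauchy_schwarz[OF real pos, of ?w v] unfolding s1 by simp
    also have "\<dots> \<le> (C * sqnorm K ?w) * Re (sesq K M v v)"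
    proof (rule mult_right_mono)
      show "Re (sesq K M ?w ?w) \<le> C * sqnorm K ?w"
        using norm_sesq_le[of K M ?w] complex_Re_le_cmod[of "sesq K M ?w ?w"] unfolding C_def by linarith
    qed (rule pos)
    finally have h: "(sqnorm K ?w)\<^sup>2 \<le> C * sqnorm K ?w * Re (sesq K M v v)" by simp
    have w_le: "sqnorm K ?w \<le> C * Re (sesq K M v v)"
    proof (cases "sqnorm K ?w = 0")
      case True then show ?thesis using C0 pos[of v] by simp
    next
      case False
      then have p: "sqnorm K ?w > 0" using sqnorm_nonneg[of K ?w] by simp
      from h have "sqnorm K ?w * sqnorm K ?w \<le> sqnorm K ?w * (C * Re (sesq K M v v))"
        by (simp add: power2_eq_square mult_ac)
      then show ?thesis using p by simp
    qed
    have "sqnorm K v = sqnorm K (mvec K B ?w)"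
      by (rule sqnorm_cong) (use mvec_inverse_right[OF inv] in auto)
    also have "\<dots> \<le> CB * sqnorm K ?w" unfolding CB_def by (rule sqnorm_mvec_le)
    also have "\<dots> \<le> CB * (C * Re (sesq K M v v))" using w_le CB0 by (rule mult_left_mono)
    finally show ?thesis by (simp add: mult_ac)
  qed
  then show ?thesis using CB0 C0 by (intro exI[of _ "CB * C"]) auto
qed


lemma tendsto_sesq:
  assumes "\<And>a b. a < K \<Longrightarrow> b < K \<Longrightarrow> ((\<lambda>E. D E a b) \<longlongrightarrow> Dbar a b) F"
    and "\<And>a. a < K \<Longrightarrow> ((\<lambda>E. v E a) \<longlongrightarrow> vb a) F"
    and "\<And>a. a < K \<Longrightarrow> ((\<lambda>E. w E a) \<longlongrightarrow> wb a) F"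
  shows "((\<lambda>E. sesq K (D E) (v E) (w E)) \<longlongrightarrow> sesq K Dbar vb wb) F"
  unfolding sesq_def by (intro tendsto_sum tendsto_mult tendsto_cnj) (use assms in auto)

lemma tendsto_cinner:
  assumes "\<And>a. a < K \<Longrightarrow> ((\<lambda>E. v E a) \<longlongrightarrow> vb a) F"
    and "\<And>a. a < K \<Longrightarrow> ((\<lambda>E. w E a) \<longlongrightarrow> wb a) F"
  shows "((\<lambda>E. cinner K (v E) (w E)) \<longlongrightarrow> cinner K vb wb) F"
  unfolding cinner_def by (intro tendsto_sum tendsto_mult tendsto_cnj) (use assms in auto)

lemma tendsto_mvec:
  assumes "\<And>a. a < K \<Longrightarrow> ((\<lambda>E. w E a) \<longlongrightarrow> wb a) F"
  shows "((\<lambda>E. mvec K M (w E) a) \<longlongrightarrow> mvec K M wb a) F"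
  unfolding mvec_def by (intro tendsto_sum tendsto_mult tendsto_const) (use assms in auto)

lemma sesq_diff: "sesq K M v v - sesq K M' v v = sesq K (\<lambda>a b. M a b - M' a b) v v"
  unfolding sesq_def by (simp add: sum_subtractf[symmetric] algebra_simps)

lemma cinner_sqnorm_0: "sqnorm K v = 0 \<Longrightarrow> cinner K v u = 0"
  unfolding cinner_def using sqnorm_eq_0D by (auto intro!: sum.neutral)


lemma sesq_inverse:
  assumes "is_inverse K M B"
  shows "cinner K (mvec K B u) u = sesq K M (mvec K B u) (mvec K B u)"
    and "cinner K (mvec K B u) u = cnj (sesq K B u u)"
proof -
  show "cinner K (mvec K B u) u = sesq K M (mvec K B u) (mvec K B u)"
    unfolding sesq_eq_cinner_mvec by (rule cinner_cong) (simp_all add: mvec_inverse_left[OF assms])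
  show "cinner K (mvec K B u) u = cnj (sesq K B u u)"
    unfolding cinner_def sesq_def mvec_def by (simp add: sum_distrib_left sum_distrib_right mult_ac)
qed

lemma sesq_inverse_pos:
  assumes coercive: "\<And>v. sqnorm K v \<le> \<kappa> * Re (sesq K M v v)" and "\<kappa> \<ge> 0"
    and inv: "is_inverse K M B" and "a0 < K" "u a0 \<noteq> 0"
  shows "Re (sesq K M (mvec K B u) (mvec K B u)) > 0"
proof -
  have "sqnorm K (mvec K B u) \<noteq> 0"
  proof
    assume "sqnorm K (mvec K B u) = 0"
    then have "mvec K M (mvec K B u) a0 = 0"
      unfolding mvec_def[of K M] using sqnorm_eq_0D by (auto intro!: sum.neutral)
    then show False
      using mvec_inverse_left[OF inv \<open>a0 < K\<close>] \<open>u a0 \<noteq> 0\<close> by simp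
  qed
  then show ?thesis
    using coercive[of "mvec K B u"] sqnorm_nonneg[of K "mvec K B u"] \<open>\<kappa> \<ge> 0\<close>
    by (smt (verit) mult_nonneg_nonpos)
qed

lemma sesq_scaled_cnj:
  "sesq K M (\<lambda>a. complex_of_real r * cnj (x a)) (\<lambda>a. complex_of_real r * cnj (x a))
    = complex_of_real (r\<^sup>2) * (\<Sum>a<K. \<Sum>b<K. x a * M a b * cnj (x b))"
  unfolding sesq_def sum_distrib_left
  by (intro sum.cong refl) (simp add: power2_eq_square mult_ac)

lemma hermitian_nonneg_limit:
  assumes "F \<noteq> bot"
    and lim: "\<And>a b. a < K \<Longrightarrow> b < K \<Longrightarrow> ((\<lambda>E. D E a b) \<longlongrightarrow> Dbar a b) F"
    and psd: "eventually (\<lambda>E. \<forall>v. Im (sesq K (D E) v v) = 0 \<and> Re (sesq K (D E) v v) \<ge> 0) F"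
  shows "Im (sesq K Dbar v v) = 0" and "Re (sesq K Dbar v v) \<ge> 0"
proof -
  have "((\<lambda>E. sesq K (D E) v v) \<longlongrightarrow> sesq K Dbar v v) F"
    by (intro tendsto_sesq lim tendsto_const)
  moreover have "eventually (\<lambda>E. Im (sesq K (D E) v v) = 0) F"
    "eventually (\<lambda>E. Re (sesq K (D E) v v) \<ge> 0) F"
    using psd by (auto elim: eventually_mono)
  ultimately show "Im (sesq K Dbar v v) = 0" "Re (sesq K Dbar v v) \<ge> 0"
    using tendsto_unique[OF assms(1)] tendsto_eventually tendsto_lowerbound[OF _ _ assms(1)]
    by (metis tendsto_Im, metis tendsto_Re)
qed

section \<open>Limits of maximal generalized Rayleigh quotients\<close>

text \<open>
  For a Hermitian positive semidefinite \<open>M\<close>, the quotient \<open>|\<langle>v, u\<rangle>|\<^sup>2 / v\<^sup>H M v\<close> is maximal at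
  \<open>v = M\<^sup>-\<^sup>1 u\<close> with value \<open>u\<^sup>H M\<^sup>-\<^sup>1 u\<close> (Cauchy-Schwarz for the form of \<open>M\<close>). Below, \<open>M\<close> is a
  perturbation of an invertible \<open>Dbar\<close>; coercivity of \<open>Dbar\<close> bounds the effect of the
  perturbation on the denominator.
\<close>

lemma rayleigh_quotient_le_perturbed:
  assumes real: "\<And>v. Im (sesq K Dbar v v) = 0" and pos: "\<And>v. Re (sesq K Dbar v v) \<ge> 0"
    and inv: "is_inverse K Dbar B"
    and coercive: "\<And>v. sqnorm K v \<le> \<kappa> * Re (sesq K Dbar v v)" and "\<kappa> \<ge> 0"
    and small: "(\<Sum>a<K. \<Sum>b<K. cmod (M a b - Dbar a b)) * \<kappa> < 1"
  shows "(cmod (cinner K v u))\<^sup>2 / Re (sesq K M v v)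
    \<le> Re (sesq K Dbar (mvec K B u) (mvec K B u)) / (1 - (\<Sum>a<K. \<Sum>b<K. cmod (M a b - Dbar a b)) * \<kappa>)"
proof -
  define \<epsilon> where "\<epsilon> = (\<Sum>a<K. \<Sum>b<K. cmod (M a b - Dbar a b))"
  define P where "P = Re (sesq K Dbar (mvec K B u) (mvec K B u))"
  have "\<epsilon> \<ge> 0" unfolding \<epsilon>_def by (simp add: sum_nonneg)
  have P: "P \<ge> 0" unfolding P_def by (rule pos)
  have den: "1 - \<epsilon> * \<kappa> > 0" using small unfolding \<epsilon>_def by simp
  show ?thesis
  proof (cases "sqnorm K v = 0")
    case True
    then show ?thesis using P den unfolding P_def \<epsilon>_def by (simp add: cinner_sqnorm_0)
  next
    case False
    define qbar where "qbar = Re (sesq K Dbar v v)"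
    have "sqnorm K v > 0" using False sqnorm_nonneg[of K v] by simp
    then have "qbar > 0" using coercive[of v] \<open>\<kappa> \<ge> 0\<close> unfolding qbar_def
      by (smt (verit) mult_nonneg_nonpos)
    have "Re (sesq K Dbar v v) - Re (sesq K M v v) \<le> cmod (sesq K (\<lambda>a b. M a b - Dbar a b) v v)"
      using complex_Re_le_cmod[of "sesq K Dbar v v - sesq K M v v"]
      by (simp add: sesq_diff[symmetric] norm_minus_commute)
    also have "\<dots> \<le> \<epsilon> * sqnorm K v"
      unfolding \<epsilon>_def by (rule norm_sesq_le)
    also have "\<dots> \<le> \<epsilon> * (\<kappa> * qbar)"
      unfolding qbar_def using coercive \<open>\<epsilon> \<ge> 0\<close> by (rule mult_left_mono)
    finally have denom: "qbar * (1 - \<epsilon> * \<kappa>) \<le> Re (sesq K M v v)"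
      unfolding qbar_def by (simp add: algebra_simps)
    have "cinner K v u = sesq K Dbar v (mvec K B u)"
      unfolding sesq_eq_cinner_mvec by (rule cinner_cong) (simp_all add: mvec_inverse_left[OF inv])
    then have num: "(cmod (cinner K v u))\<^sup>2 \<le> qbar * P"
      unfolding qbar_def P_def using sesq_cauchy_schwarz[OF real pos] by simp
    have "(cmod (cinner K v u))\<^sup>2 / Re (sesq K M v v) \<le> (qbar * P) / (qbar * (1 - \<epsilon> * \<kappa>))"
      using num denom \<open>qbar > 0\<close> den P by (intro frac_le) auto
    also have "\<dots> = P / (1 - \<epsilon> * \<kappa>)" using \<open>qbar > 0\<close> by simp
    finally show ?thesis unfolding P_def \<epsilon>_def .
  qed
qed

lemma tendsto_max_rayleigh_quotient_real:
  fixes D :: "real \<Rightarrow> nat \<Rightarrow> nat \<Rightarrow> complex" and u :: "real \<Rightarrow> nat \<Rightarrow> complex"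
    and R :: "real \<Rightarrow> real"
  assumes real: "\<And>v. Im (sesq K Dbar v v) = 0" and pos: "\<And>v. Re (sesq K Dbar v v) \<ge> 0"
    and coercive: "\<And>v. sqnorm K v \<le> \<kappa> * Re (sesq K Dbar v v)" and "\<kappa> \<ge> 0"
    and inv: "is_inverse K Dbar B"
    and D_lim: "\<And>a b. a < K \<Longrightarrow> b < K \<Longrightarrow> ((\<lambda>E. D E a b) \<longlongrightarrow> Dbar a b) at_top"
    and u_lim: "\<And>a. a < K \<Longrightarrow> ((\<lambda>E. u E a) \<longlongrightarrow> ubar a) at_top"
    and ubar_nz: "a0 < K" "ubar a0 \<noteq> 0"
    and R_upper: "\<And>E v. E > 0 \<Longrightarrow> (cmod (cinner K v (u E)))\<^sup>2 / Re (sesq K (D E) v v) \<le> R E"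
    and R_attained: "\<And>E. E > 0 \<Longrightarrow> \<exists>v. R E = (cmod (cinner K v (u E)))\<^sup>2 / Re (sesq K (D E) v v)"
  shows "(R \<longlongrightarrow> Re (sesq K Dbar (mvec K B ubar) (mvec K B ubar))) at_top"
proof -
  define v0 where "v0 = mvec K B ubar"
  define L where "L = Re (sesq K Dbar v0 v0)"
  have "L > 0"
    using sesq_inverse_pos[OF coercive \<open>\<kappa> \<ge> 0\<close> inv, of a0 ubar] ubar_nz
    unfolding L_def v0_def by blast
  have cinner_v0: "cinner K v0 ubar = complex_of_real L"
    using real[of v0] unfolding v0_def sesq_inverse(1)[OF inv] L_def v0_def by (simp add: complex_eq_iff)
  define \<epsilon> where "\<epsilon> E = (\<Sum>a<K. \<Sum>b<K. cmod (D E a b - Dbar a b))" for E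
  have "(\<epsilon> \<longlongrightarrow> (\<Sum>a<K. \<Sum>b<K. cmod (Dbar a b - Dbar a b))) at_top"
    unfolding \<epsilon>_def by (intro tendsto_sum tendsto_norm tendsto_diff D_lim tendsto_const) auto
  then have \<epsilon>_lim: "(\<epsilon> \<longlongrightarrow> 0) at_top" by simp
  define lower where "lower E = (cmod (cinner K v0 (u E)))\<^sup>2 / Re (sesq K (D E) v0 v0)" for E
  define upper where "upper E = Re (sesq K Dbar (mvec K B (u E)) (mvec K B (u E))) / (1 - \<epsilon> E * \<kappa>)" for E
  have "(lower \<longlongrightarrow> (cmod (cinner K v0 ubar))\<^sup>2 / Re (sesq K Dbar v0 v0)) at_top"
    unfolding lower_def using \<open>L > 0\<close> unfolding L_def
    by (intro tendsto_divide tendsto_power tendsto_norm tendsto_Re tendsto_cinner tendsto_sesq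
        D_lim u_lim tendsto_const) auto
  then have lower_lim: "(lower \<longlongrightarrow> L) at_top"
    using \<open>L > 0\<close> unfolding cinner_v0 L_def[symmetric] by (simp add: power2_eq_square)
  have "(upper \<longlongrightarrow> L / (1 - 0 * \<kappa>)) at_top"
    unfolding upper_def L_def v0_def
    by (intro tendsto_divide tendsto_Re tendsto_sesq tendsto_diff tendsto_mult \<epsilon>_lim tendsto_mvec
        u_lim tendsto_const) auto
  then have upper_lim: "(upper \<longlongrightarrow> L) at_top" by simp
  have "((\<lambda>E. \<epsilon> E * \<kappa>) \<longlongrightarrow> 0 * \<kappa>) at_top"
    by (intro tendsto_mult \<epsilon>_lim tendsto_const)
  then have "eventually (\<lambda>E. \<epsilon> E * \<kappa> < 1) at_top"
    by (rule order_tendstoD(2)) simp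
  then have "eventually (\<lambda>E. lower E \<le> R E \<and> R E \<le> upper E) at_top"
    using eventually_gt_at_top[of 0]
  proof eventually_elim
    case (elim E)
    from elim have small: "(\<Sum>a<K. \<Sum>b<K. cmod (D E a b - Dbar a b)) * \<kappa> < 1"
      by (simp add: \<epsilon>_def)
    obtain v where "R E = (cmod (cinner K v (u E)))\<^sup>2 / Re (sesq K (D E) v v)"
      using R_attained \<open>E > 0\<close> by blast
    moreover have "(cmod (cinner K v (u E)))\<^sup>2 / Re (sesq K (D E) v v) \<le> upper E"
      unfolding upper_def \<epsilon>_def
      by (rule rayleigh_quotient_le_perturbed[OF real pos inv coercive \<open>\<kappa> \<ge> 0\<close> small])
    ultimately show ?case
      using R_upper[OF \<open>E > 0\<close>, of v0] unfolding lower_def upper_def by simp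
  qed
  then show ?thesis
    unfolding L_def[symmetric] v0_def[symmetric]
    by (intro tendsto_sandwich[OF _ _ lower_lim upper_lim]) (auto elim: eventually_mono)
qed

lemma tendsto_max_rayleigh_quotient:
  fixes D :: "real \<Rightarrow> nat \<Rightarrow> nat \<Rightarrow> complex" and u :: "real \<Rightarrow> nat \<Rightarrow> complex"
    and R :: "real \<Rightarrow> real"
  assumes inv: "is_inverse K Dbar B"
    and D_lim: "\<And>a b. a < K \<Longrightarrow> b < K \<Longrightarrow> ((\<lambda>E. D E a b) \<longlongrightarrow> Dbar a b) at_top"
    and u_lim: "\<And>a. a < K \<Longrightarrow> ((\<lambda>E. u E a) \<longlongrightarrow> ubar a) at_top"
    and psd: "\<And>E v. E > 0 \<Longrightarrow> Im (sesq K (D E) v v) = 0 \<and> Re (sesq K (D E) v v) \<ge> 0"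
    and ubar_nz: "a0 < K" "ubar a0 \<noteq> 0"
    and R_upper: "\<And>E v. E > 0 \<Longrightarrow> (cmod (cinner K v (u E)))\<^sup>2 / Re (sesq K (D E) v v) \<le> R E"
    and R_attained: "\<And>E. E > 0 \<Longrightarrow> \<exists>v. R E = (cmod (cinner K v (u E)))\<^sup>2 / Re (sesq K (D E) v v)"
  shows "((\<lambda>E. complex_of_real (R E)) \<longlongrightarrow> sesq K B ubar ubar) at_top"
proof -
  have psd_ev: "eventually (\<lambda>E. \<forall>v. Im (sesq K (D E) v v) = 0 \<and> Re (sesq K (D E) v v) \<ge> 0) at_top"
    using eventually_gt_at_top[of 0] by eventually_elim (use psd in blast)
  have "(at_top :: real filter) \<noteq> bot" by simp
  note real = hermitian_nonneg_limit(1)[OF this D_lim psd_ev]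
    and pos = hermitian_nonneg_limit(2)[OF this D_lim psd_ev]
  obtain \<kappa> where "\<kappa> \<ge> 0" and coercive: "\<And>v. sqnorm K v \<le> \<kappa> * Re (sesq K Dbar v v)"
    using sesq_coercive[OF real pos inv] by blast
  have "sesq K B ubar ubar = cnj (cinner K (mvec K B ubar) ubar)"
    using sesq_inverse(2)[OF inv] by simp
  also have "\<dots> = complex_of_real (Re (sesq K Dbar (mvec K B ubar) (mvec K B ubar)))"
    using real unfolding sesq_inverse(1)[OF inv] by (simp add: complex_eq_iff)
  finally show ?thesis
    using tendsto_of_real[OF tendsto_max_rayleigh_quotient_real[OF real pos coercive \<open>\<kappa> \<ge> 0\<close> inv
          D_lim u_lim ubar_nz R_upper R_attained]] by simp
qed

section \<open>The single-user model\<close>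

lemma if_mult_zero: "(if c then a else 0) * b = (if c then a * b else (0::'a::mult_zero))"
  by simp
lemma mult_if_zero: "b * (if c then a else 0) = (if c then b * a else (0::'a::mult_zero))"
  by simp

definition circ_dft_adj :: "nat \<Rightarrow> nat \<Rightarrow> (nat \<Rightarrow> nat \<Rightarrow> complex) \<Rightarrow> nat \<Rightarrow> nat \<Rightarrow> nat \<Rightarrow> complex" where
  "circ_dft_adj Q T h n = matmul Q (circ Q T h n) (dft_adj Q)"

lemma yrx_eq_circ_dft_adj: "yrx Q T h Es \<omega> n p = (\<Sum>l<Q. circ_dft_adj Q T h n p l * xt Es \<omega> l) + noise \<omega> n p"
proof -
  have "matvec Q (circ Q T h n) (xsig Q Es \<omega>) p = (\<Sum>k<Q. \<Sum>l<Q. circ Q T h n p k * (dft_adj Q k l * xt Es \<omega> l))"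
    unfolding xsig_def matvec_def by (simp add: sum_distrib_left)
  also have "\<dots> = (\<Sum>l<Q. \<Sum>k<Q. circ Q T h n p k * (dft_adj Q k l * xt Es \<omega> l))"
    by (rule sum.swap)
  also have "\<dots> = (\<Sum>l<Q. circ_dft_adj Q T h n p l * xt Es \<omega> l)"
    unfolding circ_dft_adj_def matmul_def by (simp add: sum_distrib_right mult.assoc)
  finally have "matvec Q (circ Q T h n) (xsig Q Es \<omega>) p = (\<Sum>l<Q. circ_dft_adj Q T h n p l * xt Es \<omega> l)" .
  then show ?thesis unfolding yrx_def by simp
qed

lemma circ_dft_adj_eq:
  assumes Q: "Q > 0" and p: "p < Q" and l: "l < Q"
  shows "circ_dft_adj Q T h n p l = dft_adj Q p l * lam Q T h n l"
proof -
  let ?F = "dft Q" and ?G = "dft_adj Q" and ?L = "lam Q T h n"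
  have inner: "(\<Sum>i<Q. diagm ?L j i * ?F i k) = ?L j * ?F j k" if "j < Q" for j k
    using that unfolding diagm_def by (simp add: if_mult_zero)
  have "circ_dft_adj Q T h n p l = (\<Sum>k<Q. (\<Sum>j<Q. ?G p j * (?L j * ?F j k)) * ?G k l)"
    unfolding circ_dft_adj_def circ_def matmul_def using inner by simp
  also have "\<dots> = (\<Sum>k<Q. \<Sum>j<Q. ?G p j * ?L j * (?F j k * ?G k l))"
    by (simp add: sum_distrib_right sum_distrib_left mult_ac)
  also have "\<dots> = (\<Sum>j<Q. \<Sum>k<Q. ?G p j * ?L j * (?F j k * ?G k l))"
    by (rule sum.swap)
  also have "\<dots> = (\<Sum>j<Q. ?G p j * ?L j * (\<Sum>k<Q. ?F j k * ?G k l))"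
    by (simp add: sum_distrib_left)
  also have "\<dots> = (\<Sum>j<Q. ?G p j * ?L j * (if j = l then 1 else 0))"
    by (intro sum.cong refl) (simp add: dft_times_dft_adj[OF Q _ l])
  also have "\<dots> = ?G p l * ?L l" using l by (simp add: mult_if_zero)
  finally show ?thesis .
qed

lemma gauss_comb_add:
  "gauss_comb N Q (\<lambda>m q. c m q + d m q) \<omega> = gauss_comb N Q c \<omega> + gauss_comb N Q d \<omega>"
  unfolding gauss_comb_def by (simp add: distrib_right sum.distrib)

lemma gauss_comb_row:
  assumes "m \<le> N"
  shows "gauss_comb N Q (\<lambda>k q. if k = m then f q else 0) \<omega> = (\<Sum>q<Q. f q * gauss_cplx \<omega> m q)"
proof -
  have "gauss_comb N Q (\<lambda>k q. if k = m then f q else 0) \<omega>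
      = (\<Sum>k\<le>N. if k = m then (\<Sum>q<Q. f q * gauss_cplx \<omega> k q) else 0)"
    unfolding gauss_comb_def by (intro sum.cong refl) auto
  then show ?thesis using assms by simp
qed

text \<open>
  Coefficients of \<open>x~\<^sub>p\<close> and of \<open>y\<^sub>n\<^sub>,\<^sub>p\<close> with respect to the complex Gaussians: row \<open>0\<close> carries the
  signal, row \<open>n + 1\<close> the noise of antenna \<open>n\<close>.
\<close>

definition xt_weight :: "real \<Rightarrow> nat \<Rightarrow> nat \<Rightarrow> nat \<Rightarrow> complex" where
  "xt_weight Es p = (\<lambda>m q. if m = 0 then (if q = p then complex_of_real (sqrt (Es / 2)) else 0) else 0)"

definition yrx_weight :: "nat \<Rightarrow> nat \<Rightarrow> (nat \<Rightarrow> nat \<Rightarrow> complex) \<Rightarrow> real \<Rightarrow> nat \<Rightarrow> nat \<Rightarrow> nat \<Rightarrow> nat \<Rightarrow> complex" where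
  "yrx_weight Q T h Es n p = (\<lambda>m q.
      (if m = 0 then complex_of_real (sqrt (Es / 2)) * circ_dft_adj Q T h n p q else 0)
    + (if m = Suc n then (if q = p then complex_of_real (sqrt (1 / 2)) else 0) else 0))"

lemma xt_eq_gauss_comb:
  assumes "p < Q"
  shows "xt Es \<omega> p = gauss_comb N Q (xt_weight Es p) \<omega>"
  using assms unfolding xt_weight_def xt_def
  by (simp add: gauss_comb_row if_mult_zero gauss_cplx_def)

lemma yrx_eq_gauss_comb:
  assumes "n < N" "p < Q"
  shows "yrx Q T h Es \<omega> n p = gauss_comb N Q (yrx_weight Q T h Es n p) \<omega>"
  using assms unfolding yrx_weight_def gauss_comb_add yrx_eq_circ_dft_adj xt_def noise_def
  by (simp add: gauss_comb_row if_mult_zero mult_if_zero gauss_cplx_def sum_distrib_left mult_ac)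

lemma sum_norm_yrx_weight_square:
  assumes "Es \<ge> 0" "n < N" "p < Q"
  shows "(\<Sum>m\<le>N. \<Sum>q<Q. (cmod (yrx_weight Q T h Es n p m q))\<^sup>2) = Es/2 * (\<Sum>q<Q. (cmod (circ_dft_adj Q T h n p q))\<^sup>2) + 1/2"
proof -
  have pw: "(cmod (yrx_weight Q T h Es n p m q))\<^sup>2 = (if m = 0 then Es/2 * (cmod (circ_dft_adj Q T h n p q))\<^sup>2 else 0)
       + (if m = Suc n \<and> q = p then 1/2 else 0)" for m q
    using assms(1) unfolding yrx_weight_def by (auto simp: norm_mult power_mult_distrib)
  have "(\<Sum>m\<le>N. \<Sum>q<Q. (cmod (yrx_weight Q T h Es n p m q))\<^sup>2)
      = (\<Sum>m\<le>N. if m = 0 then (\<Sum>q<Q. Es/2 * (cmod (circ_dft_adj Q T h n p q))\<^sup>2) else 0)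
      + (\<Sum>m\<le>N. if m = Suc n then (\<Sum>q<Q. if q = p then 1/2 else 0) else 0)"
    unfolding pw sum.distrib by (intro arg_cong2[where f="(+)"] sum.cong refl) auto
  also have "\<dots> = Es/2 * (\<Sum>q<Q. (cmod (circ_dft_adj Q T h n p q))\<^sup>2) + 1/2"
    using assms by (simp add: sum_distrib_left)
  finally show ?thesis .
qed

lemma sum_yrx_weight_times_cnj_xt_weight:
  assumes "Es \<ge> 0" "p' < Q"
  shows "(\<Sum>m\<le>N. \<Sum>q<Q. yrx_weight Q T h Es n p m q * cnj (xt_weight Es p' m q)) = complex_of_real (Es/2) * circ_dft_adj Q T h n p p'"
proof -
  have pw: "yrx_weight Q T h Es n p m q * cnj (xt_weight Es p' m q)
      = (if m = 0 then (if q = p' then complex_of_real (Es/2) * circ_dft_adj Q T h n p p' else 0) else 0)" for m q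
  proof -
    have "complex_of_real (sqrt (Es/2)) * complex_of_real (sqrt (Es/2)) = complex_of_real (Es/2)"
      using assms(1) by (simp flip: of_real_mult)
    then show ?thesis unfolding xt_weight_def yrx_weight_def by (auto simp: mult_ac)
  qed
  have "(\<Sum>m\<le>N. \<Sum>q<Q. yrx_weight Q T h Es n p m q * cnj (xt_weight Es p' m q))
     = (\<Sum>m\<le>N. if m = 0 then complex_of_real (Es/2) * circ_dft_adj Q T h n p p' else 0)"
  proof (rule sum.cong[OF refl])
    fix m show "(\<Sum>q<Q. yrx_weight Q T h Es n p m q * cnj (xt_weight Es p' m q)) = (if m = 0 then complex_of_real (Es/2) * circ_dft_adj Q T h n p p' else 0)"
      unfolding pw using assms by (cases "m = 0") simp_all
  qed
  then show ?thesis by simp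
qed


lemma rq_eq_csgn_gauss_comb: "n < N \<Longrightarrow> p < Q \<Longrightarrow> rq Q T h Es \<omega> n p = csgn (gauss_comb N Q (yrx_weight Q T h Es n p) \<omega>)"
  unfolding rq_def by (simp add: yrx_eq_gauss_comb)

lemma integrable_rq_times_cnj_xt:
  assumes "n < N" "p < Q" "p' < Q"
  shows "integrable (Omega N Q) (\<lambda>\<omega>. rq Q T h Es \<omega> n p * cnj (xt Es \<omega> p'))"
proof -
  have "integrable (Omega N Q) (\<lambda>\<omega>. csgn (gauss_comb N Q (yrx_weight Q T h Es n p) \<omega>) * cnj (gauss_comb N Q (xt_weight Es p') \<omega>))"
    by (rule integral_csgn_gauss_comb_times_cnj(1))
  then show ?thesis using assms by (simp add: rq_eq_csgn_gauss_comb xt_eq_gauss_comb[symmetric])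
qed

lemma integrable_rq_times_cnj_rq:
  assumes "n < N" "p < Q" "m < N" "q < Q"
  shows "integrable (Omega N Q) (\<lambda>\<omega>. rq Q T h Es \<omega> n p * cnj (rq Q T h Es \<omega> m q))"
proof -
  have "integrable (Omega N Q) (\<lambda>\<omega>. csgn (gauss_comb N Q (yrx_weight Q T h Es n p) \<omega>) * cnj (csgn (gauss_comb N Q (yrx_weight Q T h Es m q) \<omega>)))"
    by (rule integrable_csgn_gauss_comb_times_cnj_csgn)
  then show ?thesis using assms by (simp add: rq_eq_csgn_gauss_comb)
qed

lemma integral_rq_times_cnj_xt:
  assumes Es: "Es \<ge> 0" and "n < N" "p < Q" "p' < Q"
  shows "(\<integral>\<omega>. rq Q T h Es \<omega> n p * cnj (xt Es \<omega> p') \<partial>Omega N Q)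
    = complex_of_real (2 / (sqrt pi * sqrt (Es/2 * (\<Sum>q<Q. (cmod (circ_dft_adj Q T h n p q))\<^sup>2) + 1/2)))
      * (complex_of_real (Es/2) * circ_dft_adj Q T h n p p')"
proof -
  have "(\<integral>\<omega>. rq Q T h Es \<omega> n p * cnj (xt Es \<omega> p') \<partial>Omega N Q)
      = (\<integral>\<omega>. csgn (gauss_comb N Q (yrx_weight Q T h Es n p) \<omega>) * cnj (gauss_comb N Q (xt_weight Es p') \<omega>) \<partial>Omega N Q)"
    using assms by (simp add: rq_eq_csgn_gauss_comb xt_eq_gauss_comb[symmetric])
  also have "\<dots> = complex_of_real (2 / (sqrt pi * sqrt (\<Sum>m\<le>N. \<Sum>q<Q. (cmod (yrx_weight Q T h Es n p m q))\<^sup>2)))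
      * (\<Sum>m\<le>N. \<Sum>q<Q. yrx_weight Q T h Es n p m q * cnj (xt_weight Es p' m q))"
    by (rule integral_csgn_gauss_comb_times_cnj(2))
  also have "\<dots> = complex_of_real (2 / (sqrt pi * sqrt (Es/2 * (\<Sum>q<Q. (cmod (circ_dft_adj Q T h n p q))\<^sup>2) + 1/2)))
      * (complex_of_real (Es/2) * circ_dft_adj Q T h n p p')"
    using assms by (simp add: sum_norm_yrx_weight_square sum_yrx_weight_times_cnj_xt_weight)
  finally show ?thesis .
qed


definition stack :: "nat \<Rightarrow> (nat \<Rightarrow> nat \<Rightarrow> complex) \<Rightarrow> nat \<Rightarrow> complex" where
  "stack Q w = (\<lambda>a. w (a div Q) (a mod Q))"

definition unstack :: "nat \<Rightarrow> (nat \<Rightarrow> complex) \<Rightarrow> nat \<Rightarrow> nat \<Rightarrow> complex" where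
  "unstack Q v = (\<lambda>n p. v (n * Q + p))"

lemma stack_unstack: "stack Q (unstack Q v) = v"
  unfolding stack_def unstack_def by (simp add: mult.commute)

lemma sum_lessThan_mult_blocks:
  fixes f :: "nat \<Rightarrow> 'a::comm_monoid_add"
  shows "(\<Sum>a<N*Q. f a) = (\<Sum>n<N. \<Sum>p<Q. f (n*Q + p))"
proof -
  have "(\<Sum>a<N*Q. f a) = (\<Sum>n<N. sum f {n*Q..<n*Q+Q})"
    by (rule sum.nat_group[symmetric])
  also have "\<dots> = (\<Sum>n<N. \<Sum>p<Q. f (n*Q + p))"
  proof (rule sum.cong[OF refl])
    fix n assume "n \<in> {..<N}"
    show "sum f {n*Q..<n*Q+Q} = (\<Sum>p<Q. f (n*Q + p))"
    proof -
      have "sum f {0 + n*Q..<Q + n*Q} = (\<Sum>p=0..<Q. f (p + n*Q))" by (rule sum.shift_bounds_nat_ivl)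
      then show ?thesis by (simp add: add.commute lessThan_atLeast0)
    qed
  qed
  finally show ?thesis .
qed


lemma cinner_stack:
  "cinner (N * Q) (stack Q w) u = (\<Sum>n<N. \<Sum>p<Q. cnj (w n p) * u (n * Q + p))"
  unfolding cinner_def sum_lessThan_mult_blocks stack_def by simp

lemma sesq_Dmat_stack:
  "sesq (N*Q) (Dmat N Q T h Es) (stack Q w) (stack Q w)
    = (\<Sum>p<Q. \<Sum>n<N. \<Sum>m<N. w n p * cnj (w m p) * Dblk N Q T h Es n m p p)"
proof -
  have "sesq (N*Q) (Dmat N Q T h Es) (stack Q w) (stack Q w)
      = (\<Sum>i<N. \<Sum>p<Q. \<Sum>k<N. \<Sum>q<Q. cnj (w i p) * Dblk N Q T h Es k i p q * w k q)"
    unfolding sesq_def sum_lessThan_mult_blocks Dmat_def stack_def by simp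
  also have "\<dots> = (\<Sum>i<N. \<Sum>p<Q. \<Sum>k<N. cnj (w i p) * Dblk N Q T h Es k i p p * w k p)"
  proof (intro sum.cong refl)
    fix i p k assume p: "p \<in> {..<Q}"
    have "(\<Sum>q<Q. cnj (w i p) * Dblk N Q T h Es k i p q * w k q) = (\<Sum>q<Q. if q = p then cnj (w i p) * Dblk N Q T h Es k i p p * w k p else 0)"
      unfolding Dblk_def diagm_def by (intro sum.cong refl) auto
    then show "(\<Sum>q<Q. cnj (w i p) * Dblk N Q T h Es k i p q * w k q) = cnj (w i p) * Dblk N Q T h Es k i p p * w k p"
      using p by simp
  qed
  also have "\<dots> = (\<Sum>p<Q. \<Sum>i<N. \<Sum>k<N. cnj (w i p) * Dblk N Q T h Es k i p p * w k p)"
    by (rule sum.swap)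
  also have "\<dots> = (\<Sum>p<Q. \<Sum>k<N. \<Sum>i<N. cnj (w i p) * Dblk N Q T h Es k i p p * w k p)"
    by (rule sum.cong[OF refl], rule sum.swap)
  also have "\<dots> = (\<Sum>p<Q. \<Sum>n<N. \<Sum>m<N. w n p * cnj (w m p) * Dblk N Q T h Es n m p p)"
    by (simp add: mult_ac)
  finally show ?thesis .
qed


definition corr_vec :: "nat \<Rightarrow> nat \<Rightarrow> nat \<Rightarrow> (nat \<Rightarrow> nat \<Rightarrow> complex) \<Rightarrow> real \<Rightarrow> nat \<Rightarrow> complex" where
  "corr_vec N Q T h Es a =
    (\<Sum>q<Q. cnj (dft Q (a mod Q) q) * cnj (\<integral>\<omega>. rq Q T h Es \<omega> (a div Q) q * cnj (xt Es \<omega> (a mod Q)) \<partial>Omega N Q))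
      / complex_of_real (sqrt (real Q * Es))"

lemma integral_xhat_inner_xt:
  assumes "Q > 0" "Es > 0"
  shows "(\<integral>\<omega>. (\<Sum>p<Q. cnj (xhat N Q T h Es w \<omega> p) * xt Es \<omega> p) \<partial>Omega N Q)
    = complex_of_real (sqrt (real Q * Es)) * cinner (N * Q) (stack Q w) (corr_vec N Q T h Es)"
proof -
  let ?g = "\<lambda>p n q \<omega>. cnj (w n p) * cnj (dft Q p q) * cnj (rq Q T h Es \<omega> n q * cnj (xt Es \<omega> p))"
  have pointwise: "(\<Sum>p<Q. cnj (xhat N Q T h Es w \<omega> p) * xt Es \<omega> p) = (\<Sum>p<Q. \<Sum>n<N. \<Sum>q<Q. ?g p n q \<omega>)"
    for \<omega>
    unfolding xhat_def matvec_def by (simp add: sum_distrib_left sum_distrib_right mult_ac)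
  have integrable_g: "integrable (Omega N Q) (?g p n q)" if "n < N" "q < Q" "p < Q" for p n q
    using integrable_rq_times_cnj_xt[OF that, of T h Es] by (intro integrable_mult_right integrable_cnj)
  have "(\<integral>\<omega>. (\<Sum>p<Q. cnj (xhat N Q T h Es w \<omega> p) * xt Es \<omega> p) \<partial>Omega N Q)
      = (\<Sum>p<Q. \<integral>\<omega>. (\<Sum>n<N. \<Sum>q<Q. ?g p n q \<omega>) \<partial>Omega N Q)"
    unfolding pointwise by (intro Bochner_Integration.integral_sum Bochner_Integration.integrable_sum integrable_g) simp_all
  also have "\<dots> = (\<Sum>p<Q. \<Sum>n<N. \<integral>\<omega>. (\<Sum>q<Q. ?g p n q \<omega>) \<partial>Omega N Q)"
    by (intro sum.cong refl Bochner_Integration.integral_sum Bochner_Integration.integrable_sum integrable_g) simp_all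
  also have "\<dots> = (\<Sum>p<Q. \<Sum>n<N. \<Sum>q<Q. integral\<^sup>L (Omega N Q) (?g p n q))"
    by (intro sum.cong refl Bochner_Integration.integral_sum Bochner_Integration.integrable_sum integrable_g) simp_all
  also have "\<dots> = (\<Sum>p<Q. \<Sum>n<N. cnj (w n p)
      * (\<Sum>q<Q. cnj (dft Q p q) * cnj (\<integral>\<omega>. rq Q T h Es \<omega> n q * cnj (xt Es \<omega> p) \<partial>Omega N Q)))"
    unfolding integral_mult_right_zero Bochner_Integration.integral_cnj by (simp add: sum_distrib_left mult.assoc)
  also have "\<dots> = (\<Sum>p<Q. \<Sum>n<N. cnj (w n p) * (complex_of_real (sqrt (real Q * Es)) * corr_vec N Q T h Es (n * Q + p)))"
    using assms by (simp add: corr_vec_def)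
  also have "\<dots> = (\<Sum>n<N. \<Sum>p<Q. cnj (w n p) * (complex_of_real (sqrt (real Q * Es)) * corr_vec N Q T h Es (n * Q + p)))"
    by (rule sum.swap)
  finally show ?thesis
    by (simp add: cinner_stack sum_distrib_left mult_ac)
qed

lemma integral_norm_xhat_square:
  "complex_of_real (\<integral>\<omega>. (\<Sum>p<Q. (cmod (xhat N Q T h Es w \<omega> p))\<^sup>2) \<partial>Omega N Q)
    = sesq (N * Q) (Dmat N Q T h Es) (stack Q w) (stack Q w)"
proof -
  let ?r = "\<lambda>\<omega> n k. rq Q T h Es \<omega> n k"
  let ?g = "\<lambda>p n m k l \<omega>. (w n p * cnj (w m p) * (dft Q p k * cnj (dft Q p l))) * (?r \<omega> n k * cnj (?r \<omega> m l))"
  have "complex_of_real (\<Sum>p<Q. (cmod (xhat N Q T h Es w \<omega> p))\<^sup>2)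
      = (\<Sum>p<Q. xhat N Q T h Es w \<omega> p * cnj (xhat N Q T h Es w \<omega> p))" for \<omega>
    by (simp only: of_real_sum complex_norm_square)
  also have "\<dots> \<omega> = (\<Sum>p<Q. \<Sum>m<N. \<Sum>n<N. \<Sum>l<Q. \<Sum>k<Q. ?g p n m k l \<omega>)" for \<omega>
    unfolding xhat_def matvec_def by (simp add: sum_product sum_distrib_left mult_ac)
  finally have pointwise: "complex_of_real (\<Sum>p<Q. (cmod (xhat N Q T h Es w \<omega> p))\<^sup>2)
      = (\<Sum>p<Q. \<Sum>m<N. \<Sum>n<N. \<Sum>l<Q. \<Sum>k<Q. ?g p n m k l \<omega>)" for \<omega> .
  have integrable_g: "integrable (Omega N Q) (?g p n m k l)" if "n < N" "k < Q" "m < N" "l < Q" for p n m k l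
    using integrable_rq_times_cnj_rq[OF that, of T h Es] by (intro integrable_mult_right)
  have "complex_of_real (\<integral>\<omega>. (\<Sum>p<Q. (cmod (xhat N Q T h Es w \<omega> p))\<^sup>2) \<partial>Omega N Q)
      = (\<Sum>p<Q. \<integral>\<omega>. (\<Sum>m<N. \<Sum>n<N. \<Sum>l<Q. \<Sum>k<Q. ?g p n m k l \<omega>) \<partial>Omega N Q)"
    unfolding integral_complex_of_real[symmetric] pointwise
    by (intro Bochner_Integration.integral_sum Bochner_Integration.integrable_sum integrable_g) simp_all
  also have "\<dots> = (\<Sum>p<Q. \<Sum>m<N. \<integral>\<omega>. (\<Sum>n<N. \<Sum>l<Q. \<Sum>k<Q. ?g p n m k l \<omega>) \<partial>Omega N Q)"
    by (intro sum.cong refl Bochner_Integration.integral_sum Bochner_Integration.integrable_sum integrable_g) simp_all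
  also have "\<dots> = (\<Sum>p<Q. \<Sum>m<N. \<Sum>n<N. \<integral>\<omega>. (\<Sum>l<Q. \<Sum>k<Q. ?g p n m k l \<omega>) \<partial>Omega N Q)"
    by (intro sum.cong refl Bochner_Integration.integral_sum Bochner_Integration.integrable_sum integrable_g) simp_all
  also have "\<dots> = (\<Sum>p<Q. \<Sum>m<N. \<Sum>n<N. \<Sum>l<Q. \<integral>\<omega>. (\<Sum>k<Q. ?g p n m k l \<omega>) \<partial>Omega N Q)"
    by (intro sum.cong refl Bochner_Integration.integral_sum Bochner_Integration.integrable_sum integrable_g) simp_all
  also have "\<dots> = (\<Sum>p<Q. \<Sum>m<N. \<Sum>n<N. \<Sum>l<Q. \<Sum>k<Q. integral\<^sup>L (Omega N Q) (?g p n m k l))"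
    by (intro sum.cong refl Bochner_Integration.integral_sum Bochner_Integration.integrable_sum integrable_g) simp_all
  also have "\<dots> = (\<Sum>p<Q. \<Sum>m<N. \<Sum>n<N. w n p * cnj (w m p)
      * (\<Sum>l<Q. \<Sum>k<Q. (dft Q p k * cnj (dft Q p l)) * Rmat N Q T h Es n m k l))"
    unfolding Rmat_def by (simp add: sum_distrib_left mult.assoc)
  also have "\<dots> = (\<Sum>p<Q. \<Sum>m<N. \<Sum>n<N. w n p * cnj (w m p) * Dblk N Q T h Es n m p p)"
    unfolding Dblk_def diagm_def matmul_def dft_adj_def
    by (simp add: sum_distrib_right sum_distrib_left mult_ac)
  also have "\<dots> = (\<Sum>p<Q. \<Sum>n<N. \<Sum>m<N. w n p * cnj (w m p) * Dblk N Q T h Es n m p p)"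
    by (rule sum.cong[OF refl], rule sum.swap)
  also have "\<dots> = sesq (N * Q) (Dmat N Q T h Es) (stack Q w) (stack Q w)"
    by (rule sesq_Dmat_stack[symmetric])
  finally show ?thesis .
qed

lemma Delta_eq_rayleigh_quotient:
  assumes "Q > 0" "Es > 0"
  shows "Delta N Q T h Es w = (cmod (cinner (N * Q) (stack Q w) (corr_vec N Q T h Es)))\<^sup>2
    / Re (sesq (N * Q) (Dmat N Q T h Es) (stack Q w) (stack Q w))"
proof -
  have "(\<integral>\<omega>. (\<Sum>p<Q. (cmod (xhat N Q T h Es w \<omega> p))\<^sup>2) \<partial>Omega N Q)
      = Re (sesq (N * Q) (Dmat N Q T h Es) (stack Q w) (stack Q w))"
    using arg_cong[OF integral_norm_xhat_square, of Re] by simp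
  then show ?thesis
    using assms unfolding Delta_def integral_xhat_inner_xt[OF assms]
    by (simp add: norm_mult power_mult_distrib)
qed

lemma Dmat_psd:
  "Im (sesq (N * Q) (Dmat N Q T h Es) v v) = 0 \<and> Re (sesq (N * Q) (Dmat N Q T h Es) v v) \<ge> 0"
proof -
  have "sesq (N * Q) (Dmat N Q T h Es) v v
      = complex_of_real (\<integral>\<omega>. (\<Sum>p<Q. (cmod (xhat N Q T h Es (unstack Q v) \<omega> p))\<^sup>2) \<partial>Omega N Q)"
    using integral_norm_xhat_square[of N Q T h Es "unstack Q v"] by (simp add: stack_unstack)
  moreover have "(\<integral>\<omega>. (\<Sum>p<Q. (cmod (xhat N Q T h Es (unstack Q v) \<omega> p))\<^sup>2) \<partial>Omega N Q) \<ge> 0"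
    by (intro integral_nonneg_AE AE_I2 sum_nonneg) auto
  ultimately show ?thesis by simp
qed

subsection \<open>The high-SNR limit of the normalized cross-correlation\<close>

lemma vnorm_square: "(vnorm Q v)\<^sup>2 = (\<Sum>q<Q. (cmod (v q))\<^sup>2)"
  unfolding vnorm_def by (simp add: sum_nonneg)

lemma vnorm_pos: "q < Q \<Longrightarrow> v q \<noteq> 0 \<Longrightarrow> vnorm Q v > 0"
  unfolding vnorm_def
  by (intro real_sqrt_gt_zero sum_pos2[of _ q]) auto

lemma sum_norm_circ_dft_adj_square:
  assumes "Q > 0" "p < Q"
  shows "(\<Sum>q<Q. (cmod (circ_dft_adj Q T h n p q))\<^sup>2) = (vnorm Q (lam Q T h n))\<^sup>2 / real Q"
  using assms
  by (simp add: circ_dft_adj_eq norm_mult power_mult_distrib norm_dft_adj_square vnorm_square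
      sum_divide_distrib)

lemma corr_vec_eq:
  fixes T :: nat and h :: "nat \<Rightarrow> nat \<Rightarrow> complex"
  assumes Q: "Q > 0" and Es: "Es > 0" and n: "n < N" and p: "p < Q"
  defines "V \<equiv> (vnorm Q (lam Q T h n))\<^sup>2"
  shows "corr_vec N Q T h Es (n * Q + p)
    = complex_of_real (1 / (sqrt pi * sqrt (V / 2 + real Q / (2 * Es)))) * cnj (lam Q T h n p)"
proof -
  define c where "c = 2 / (sqrt pi * sqrt (Es / 2 * (V / real Q) + 1 / 2))"
  have summand: "cnj (dft Q p q) * cnj (\<integral>\<omega>. rq Q T h Es \<omega> n q * cnj (xt Es \<omega> p) \<partial>Omega N Q)
      = complex_of_real (c * (Es / 2) / real Q) * cnj (lam Q T h n p)" if q: "q < Q" for q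
  proof -
    have integral: "(\<integral>\<omega>. rq Q T h Es \<omega> n q * cnj (xt Es \<omega> p) \<partial>Omega N Q)
        = complex_of_real c * (complex_of_real (Es / 2) * (cnj (dft Q p q) * lam Q T h n p))"
      using Es unfolding integral_rq_times_cnj_xt[OF less_imp_le[OF Es] n q p]
        sum_norm_circ_dft_adj_square[OF Q q] circ_dft_adj_eq[OF Q q p] dft_adj_def c_def V_def
      by simp
    have "cnj (dft Q p q) * cnj (\<integral>\<omega>. rq Q T h Es \<omega> n q * cnj (xt Es \<omega> p) \<partial>Omega N Q)
        = complex_of_real (c * (Es / 2)) * (dft Q p q * cnj (dft Q p q)) * cnj (lam Q T h n p)"
      unfolding integral by (simp add: mult_ac)
    also have "dft Q p q * cnj (dft Q p q) = complex_of_real (1 / real Q)"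
      using complex_norm_square[of "dft Q p q"] norm_dft_square[OF Q] by simp
    finally show ?thesis by simp
  qed
  have "c * (Es / 2) / sqrt (real Q * Es) = 1 / (sqrt pi * sqrt (V / 2 + real Q / (2 * Es)))"
  proof -
    have "(Es / 2 * (V / real Q) + 1 / 2) * (real Q * Es) = Es\<^sup>2 * (V / 2 + real Q / (2 * Es))"
      using Q Es by (simp add: field_simps power2_eq_square)
    then have "sqrt (Es / 2 * (V / real Q) + 1 / 2) * sqrt (real Q * Es) = Es * sqrt (V / 2 + real Q / (2 * Es))"
      using Es by (metis real_sqrt_mult real_sqrt_abs abs_of_pos)
    then show ?thesis
      using Es unfolding c_def by (simp add: field_simps)
  qed
  note scalar = this
  have "corr_vec N Q T h Es (n * Q + p)
      = (\<Sum>q<Q. complex_of_real (c * (Es / 2) / real Q) * cnj (lam Q T h n p)) / complex_of_real (sqrt (real Q * Es))"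
    using p unfolding corr_vec_def by (simp add: summand)
  also have "\<dots> = complex_of_real (c * (Es / 2) / sqrt (real Q * Es)) * cnj (lam Q T h n p)"
    using Q by (simp add: of_real_divide of_real_mult)
  finally show ?thesis unfolding scalar .
qed

lemma tendsto_corr_vec:
  assumes Q: "Q > 0" and a: "a < N * Q" and V: "vnorm Q (lam Q T h (a div Q)) > 0"
  shows "((\<lambda>Es. corr_vec N Q T h Es a) \<longlongrightarrow> complex_of_real (sqrt (2 / pi)) * cnj (lambar Q T h a)) at_top"
proof -
  let ?n = "a div Q" and ?p = "a mod Q"
  let ?V = "(vnorm Q (lam Q T h ?n))\<^sup>2"
  have n: "?n < N" using a Q by (simp add: less_mult_imp_div_less)
  have a_eq: "a = ?n * Q + ?p" by simp
  have "eventually (\<lambda>Es. corr_vec N Q T h Es a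
      = complex_of_real (1 / (sqrt pi * sqrt (?V / 2 + real Q / (2 * Es)))) * cnj (lam Q T h ?n ?p)) at_top"
    using eventually_gt_at_top[of 0]
    by eventually_elim (subst a_eq, rule corr_vec_eq[OF Q _ n], use Q in auto)
  moreover have "((\<lambda>Es. 1 / (sqrt pi * sqrt (?V / 2 + real Q / (2 * Es)))) \<longlongrightarrow> 1 / (sqrt pi * sqrt (?V / 2 + 0))) at_top"
    using V
    by (intro tendsto_divide tendsto_mult tendsto_real_sqrt tendsto_add tendsto_const
        tendsto_divide_0[OF tendsto_const] filterlim_at_top_imp_at_infinity
        filterlim_tendsto_pos_mult_at_top[OF tendsto_const _ filterlim_ident])
      auto
  moreover have "1 / (sqrt pi * sqrt (?V / 2 + 0)) = sqrt (2 / pi) / vnorm Q (lam Q T h ?n)"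
    using V by (simp add: real_sqrt_divide real_sqrt_mult field_simps)
  ultimately have "((\<lambda>Es. complex_of_real (1 / (sqrt pi * sqrt (?V / 2 + real Q / (2 * Es))))
      * cnj (lam Q T h ?n ?p)) \<longlongrightarrow> complex_of_real (sqrt (2 / pi) / vnorm Q (lam Q T h ?n)) * cnj (lam Q T h ?n ?p))
      at_top"
    by (intro tendsto_mult tendsto_of_real tendsto_const) simp
  moreover have "complex_of_real (sqrt (2 / pi) / vnorm Q (lam Q T h ?n)) * cnj (lam Q T h ?n ?p)
      = complex_of_real (sqrt (2 / pi)) * cnj (lambar Q T h a)"
    unfolding lambar_def by (simp add: of_real_divide)
  ultimately show ?thesis
    using tendsto_cong[OF \<open>eventually _ at_top\<close>] by simp
qed

lemma rayleigh_quotient_le_Delta_max: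
  assumes "Q > 0" "Es > 0" and max: "\<And>w. Delta N Q T h Es w \<le> Delta N Q T h Es w'"
  shows "(cmod (cinner (N * Q) v (corr_vec N Q T h Es)))\<^sup>2 / Re (sesq (N * Q) (Dmat N Q T h Es) v v)
    \<le> Delta N Q T h Es w'"
  using Delta_eq_rayleigh_quotient[OF assms(1,2), of N T h "unstack Q v"] max[of "unstack Q v"]
  by (simp add: stack_unstack)

lemma is_inverse_inv_sq:
  assumes "invertible_sq K A"
  shows "is_inverse K A (inv_sq K A)"
proof -
  let ?B = "SOME B. is_inverse K A B"
  have "is_inverse K A ?B"
    using assms unfolding invertible_sq_def by (rule someI_ex)
  moreover have "(\<Sum>k<K. A i k * inv_sq K A k j) = (\<Sum>k<K. A i k * ?B k j)"
    and "(\<Sum>k<K. inv_sq K A i k * A k j) = (\<Sum>k<K. ?B i k * A k j)" if "i < K" "j < K" for i j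
    using that unfolding inv_sq_def by (auto intro!: sum.cong)
  ultimately show ?thesis
    unfolding is_inverse_def by simp
qed

theorem corollary4:
  fixes N Q T :: nat and h :: "nat \<Rightarrow> nat \<Rightarrow> complex"
    and Dbar :: "nat \<Rightarrow> nat \<Rightarrow> complex"
    and wopt :: "real \<Rightarrow> nat \<Rightarrow> nat \<Rightarrow> complex"
  assumes "N \<ge> 1" and "Q \<ge> 1" and "1 \<le> T" and "T \<le> Q"
    and lam_nz: "\<forall>n<N. \<exists>q<Q. lam Q T h n q \<noteq> 0"
    and Dbar_lim: "\<forall>a<N*Q. \<forall>b<N*Q. ((\<lambda>Es. Dmat N Q T h Es a b) \<longlongrightarrow> Dbar a b) at_top"
    and Dbar_inv: "invertible_sq (N*Q) Dbar"
    and wopt_max: "\<forall>Es>0. \<forall>w. Delta N Q T h Es w \<le> Delta N Q T h Es (wopt Es)"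
  shows "((\<lambda>Es. complex_of_real (Delta N Q T h Es (wopt Es))) \<longlongrightarrow>
           complex_of_real (2 / pi) *
             (\<Sum>a<N*Q. \<Sum>b<N*Q. lambar Q T h a * inv_sq (N*Q) Dbar a b * cnj (lambar Q T h b)))
         at_top"
proof -
  have "Q > 0" "N > 0" using assms(1,2) by auto
  let ?ubar = "\<lambda>a. complex_of_real (sqrt (2 / pi)) * cnj (lambar Q T h a)"
  have vnorm_lam: "vnorm Q (lam Q T h n) > 0" if "n < N" for n
    using lam_nz that vnorm_pos by blast
  obtain q0 where "q0 < Q" "lam Q T h 0 q0 \<noteq> 0"
    using lam_nz \<open>N > 0\<close> by blast
  have "((\<lambda>Es. complex_of_real (Delta N Q T h Es (wopt Es))) \<longlongrightarrow> sesq (N * Q) (inv_sq (N * Q) Dbar) ?ubar ?ubar)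
      at_top"
  proof (rule tendsto_max_rayleigh_quotient[OF is_inverse_inv_sq[OF Dbar_inv] _ _ Dmat_psd])
    show "((\<lambda>Es. Dmat N Q T h Es a b) \<longlongrightarrow> Dbar a b) at_top" if "a < N * Q" "b < N * Q" for a b
      using Dbar_lim that by blast
    show "((\<lambda>Es. corr_vec N Q T h Es a) \<longlongrightarrow> ?ubar a) at_top" if "a < N * Q" for a
      using that \<open>Q > 0\<close> by (intro tendsto_corr_vec vnorm_lam) (auto simp: less_mult_imp_div_less)
    show "q0 < N * Q" "?ubar q0 \<noteq> 0"
      using \<open>q0 < Q\<close> \<open>lam Q T h 0 q0 \<noteq> 0\<close> vnorm_lam[OF \<open>N > 0\<close>] \<open>N > 0\<close>
      by (auto simp: lambar_def intro: less_le_trans[OF _ mult_le_mono1[of 1 N Q]])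
    show "\<exists>v. Delta N Q T h Es (wopt Es) = (cmod (cinner (N * Q) v (corr_vec N Q T h Es)))\<^sup>2
        / Re (sesq (N * Q) (Dmat N Q T h Es) v v)" if "Es > 0" for Es
      using Delta_eq_rayleigh_quotient[OF \<open>Q > 0\<close> that] by blast
  qed (use rayleigh_quotient_le_Delta_max \<open>Q > 0\<close> wopt_max in blast)
  then show ?thesis
    by (simp add: sesq_scaled_cnj)
qed

end
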